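(* Let $\Omega\subset\mathbb{R}^n$, $n\geq2$, be a bounded Lipschitz domain of diameter at most $R_m$. Let $k\geq0$ and $0\leq\alpha\leq1$. Let $\varphi\in C^\alpha(\overline\Omega)$ and $u\in H^2_0(\Omega)$ satisfy $(\Delta+k^2)u=\varphi$ in $\Omega$. Then \[ \sup_{\partial\Omega}|\varphi|\leq C\big(\operatorname{diam}(\Omega)\big)^\alpha\|\varphi\|_{C^\alpha(\overline\Omega)} \] for a finite positive constant $C=C(n,R_m,k)$ depending only on $n,R_m,k$.
   Context: $\|\cdot\|_{C^\alpha}$ denotes the standard Hölder norm. Standing assumption: bounded domains satisfy $H^2_0(\Omega)=\{u|_\Omega: u\in H^2(\mathbb{R}^n),\ u=0 \text{ in } \mathbb{R}^n\setminus\overline\Omega\}$. *)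

theory Defs
  imports "HOL-Analysis.Analysis"
begin

definition pd :: "'n::finite \<Rightarrow> (real^'n \<Rightarrow> real) \<Rightarrow> real^'n \<Rightarrow> real" where
  "pd i f x = deriv (\<lambda>t. f (x + t *\<^sub>R axis i 1)) 0"

fun iter_pd :: "'n::finite list \<Rightarrow> (real^'n \<Rightarrow> real) \<Rightarrow> real^'n \<Rightarrow> real" where
  "iter_pd [] f = f"
| "iter_pd (i # is) f = pd i (iter_pd is f)"

definition smooth_fun :: "(real^'n::finite \<Rightarrow> real) \<Rightarrow> bool" where
  "smooth_fun f \<longleftrightarrow>
     (\<forall>is. continuous_on UNIV (iter_pd is f)) \<and>
     (\<forall>is i x. (\<lambda>t. iter_pd is f (x + t *\<^sub>R axis i 1)) differentiable (at 0))"

definition supp :: "(real^'n::finite \<Rightarrow> real) \<Rightarrow> (real^'n) set" where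
  "supp f = closure {x. f x \<noteq> 0}"

definition test_fun :: "(real^'n::finite \<Rightarrow> real) \<Rightarrow> bool" where
  "test_fun f \<longleftrightarrow> smooth_fun f \<and> compact (supp f)"

definition L2 :: "(real^'n::finite \<Rightarrow> complex) \<Rightarrow> bool" where
  "L2 u \<longleftrightarrow> u \<in> borel_measurable lborel \<and> integrable lborel (\<lambda>x. (cmod (u x))\<^sup>2)"

definition weak_pd :: "'n::finite \<Rightarrow> (real^'n \<Rightarrow> complex) \<Rightarrow> (real^'n \<Rightarrow> complex) \<Rightarrow> bool" where
  "weak_pd i u g \<longleftrightarrow> (\<forall>\<psi>. test_fun \<psi> \<longrightarrow>
     (\<integral>x. u x * of_real (pd i \<psi> x) \<partial>lborel) = - (\<integral>x. g x * of_real (\<psi> x) \<partial>lborel))"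

definition weak_pd2 :: "'n::finite \<Rightarrow> 'n \<Rightarrow> (real^'n \<Rightarrow> complex) \<Rightarrow> (real^'n \<Rightarrow> complex) \<Rightarrow> bool" where
  "weak_pd2 i j u h \<longleftrightarrow> (\<forall>\<psi>. test_fun \<psi> \<longrightarrow>
     (\<integral>x. u x * of_real (pd i (pd j \<psi>) x) \<partial>lborel) = (\<integral>x. h x * of_real (\<psi> x) \<partial>lborel))"

definition H2 :: "(real^'n::finite \<Rightarrow> complex) \<Rightarrow> bool" where
  "H2 u \<longleftrightarrow> L2 u \<and> (\<forall>i. \<exists>g. L2 g \<and> weak_pd i u g) \<and> (\<forall>i j. \<exists>h. L2 h \<and> weak_pd2 i j u h)"

text \<open>H^2_0(Omega) as in the standing assumption: H^2(R^n) functions vanishing outside closure Omega.\<close>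
definition H2_0 :: "(real^'n::finite) set \<Rightarrow> (real^'n \<Rightarrow> complex) \<Rightarrow> bool" where
  "H2_0 \<Omega> u \<longleftrightarrow> H2 u \<and> (AE x in lborel. x \<notin> closure \<Omega> \<longrightarrow> u x = 0)"

definition helmholtz_eq :: "(real^'n::finite) set \<Rightarrow> real \<Rightarrow> (real^'n \<Rightarrow> complex) \<Rightarrow> (real^'n \<Rightarrow> complex) \<Rightarrow> bool" where
  "helmholtz_eq \<Omega> k u \<phi> \<longleftrightarrow> (\<forall>\<psi>. test_fun \<psi> \<and> supp \<psi> \<subseteq> \<Omega> \<longrightarrow>
     (\<integral>x. u x * of_real ((\<Sum>i\<in>UNIV. pd i (pd i \<psi>) x) + k\<^sup>2 * \<psi> x) \<partial>lborel)
       = (\<integral>x. \<phi> x * of_real (\<psi> x) \<partial>lborel))"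

text \<open>Bounded Lipschitz domain: nonempty open connected set whose boundary is locally,
  in suitably rotated coordinates (direction e), the graph of a Lipschitz function,
  with Omega lying on one side.\<close>
definition lipschitz_domain :: "(real^'n::finite) set \<Rightarrow> bool" where
  "lipschitz_domain \<Omega> \<longleftrightarrow> open \<Omega> \<and> connected \<Omega> \<and> \<Omega> \<noteq> {} \<and>
     (\<forall>x0\<in>frontier \<Omega>. \<exists>r>0. \<exists>e. norm e = 1 \<and> (\<exists>\<gamma> L. L-lipschitz_on UNIV \<gamma> \<and>
        \<Omega> \<inter> ball x0 r = {x \<in> ball x0 r. x \<bullet> e > \<gamma> (x - (x \<bullet> e) *\<^sub>R e)}))"

definition holder_seminorm :: "real \<Rightarrow> (real^'n::finite) set \<Rightarrow> (real^'n \<Rightarrow> complex) \<Rightarrow> real" where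
  "holder_seminorm \<alpha> S f = Sup {cmod (f x - f y) / (dist x y powr \<alpha>) | x y. x \<in> S \<and> y \<in> S \<and> x \<noteq> y}"

definition holder_space :: "real \<Rightarrow> (real^'n::finite) set \<Rightarrow> (real^'n \<Rightarrow> complex) \<Rightarrow> bool" where
  "holder_space \<alpha> S f \<longleftrightarrow> continuous_on S f \<and> bounded (f ` S) \<and>
     bdd_above {cmod (f x - f y) / (dist x y powr \<alpha>) | x y. x \<in> S \<and> y \<in> S \<and> x \<noteq> y}"

definition holder_norm :: "real \<Rightarrow> (real^'n::finite) set \<Rightarrow> (real^'n \<Rightarrow> complex) \<Rightarrow> real" where
  "holder_norm \<alpha> S f = Sup ((\<lambda>x. cmod (f x)) ` S) + holder_seminorm \<alpha> S f"

end

theory Submission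
  imports Defs "HOL-Computational_Algebra.Polynomial"
begin

text \<open>The Helmholtz operator \<open>\<Delta> + k\<^sup>2\<close> annihilates every plane wave \<open>cos (k x\<^sub>j + d)\<close>.
  As \<open>u \<in> H\<^sup>2\<^sub>0(\<Omega>)\<close> vanishes outside \<open>closure \<Omega>\<close> and the boundary of a Lipschitz domain
  is a null set, testing the equation against a cut-off of such a wave shows that \<open>\<phi>\<close> is
  orthogonal on \<open>\<Omega>\<close> to all plane waves. If \<open>k diam \<Omega> < \<pi>/2\<close>, a suitably shifted wave is
  positive on \<open>\<Omega>\<close>, so \<open>Re \<phi>\<close> and \<open>Im \<phi>\<close> change sign and hence vanish in the connected
  set \<open>\<Omega>\<close>; the Hoelder seminorm then bounds \<open>|\<phi>|\<close> on the boundary by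
  \<open>2 [\<phi>]\<^sub>\<alpha> diam(\<Omega>)\<^sup>\<alpha>\<close>. Otherwise \<open>diam \<Omega> \<ge> \<pi>/(2k)\<close> and the trivial bound by
  \<open>sup |\<phi>|\<close> already has the required form. Altogether \<open>C = 2 + 2k/\<pi>\<close> works.\<close>

section \<open>Calculus of smooth functions\<close>

text \<open>Smoothness is proved by exhibiting a class of functions that is closed under every
  partial derivative.\<close>

definition pd_stable :: "((real^'n::finite) \<Rightarrow> real) set \<Rightarrow> bool" where
  "pd_stable S \<longleftrightarrow> (\<forall>f\<in>S. continuous_on UNIV f \<and>
     (\<forall>i x. (\<lambda>t. f (x + t *\<^sub>R axis i 1)) differentiable (at 0)) \<and> (\<forall>i. pd i f \<in> S))"

lemma pd_stable_iter_pd: "pd_stable S \<Longrightarrow> f \<in> S \<Longrightarrow> iter_pd is f \<in> S"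
  by (induction "is") (auto simp: pd_stable_def)

lemma pd_stable_smooth_fun:
  assumes S: "pd_stable S" and f: "f \<in> S"
  shows "smooth_fun f"
proof -
  have "\<And>is. iter_pd is f \<in> S" using pd_stable_iter_pd[OF S f] .
  with S show ?thesis unfolding smooth_fun_def pd_stable_def by blast
qed

lemma iter_pd_snoc: "iter_pd (is @ [i]) f = iter_pd is (pd i f)"
  by (induction "is") auto

lemma smooth_fun_pd: "smooth_fun f \<Longrightarrow> smooth_fun (pd i f)"
  unfolding smooth_fun_def by (metis iter_pd_snoc)

lemma smooth_fun_continuous_on: "smooth_fun f \<Longrightarrow> continuous_on UNIV f"
  unfolding smooth_fun_def by (metis iter_pd.simps(1))

lemma pd_eqI: "((\<lambda>t. f (x + t *\<^sub>R axis i 1)) has_field_derivative D) (at 0) \<Longrightarrow> pd i f x = D"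
  unfolding pd_def by (rule DERIV_imp_deriv)

lemma smooth_fun_line_differentiable:
  "smooth_fun f \<Longrightarrow> (\<lambda>t. f (x + t *\<^sub>R axis i 1)) differentiable (at 0)"
  unfolding smooth_fun_def by (metis iter_pd.simps(1))

lemma smooth_fun_has_pd:
  "smooth_fun f \<Longrightarrow> ((\<lambda>t. f (x + t *\<^sub>R axis i 1)) has_field_derivative pd i f x) (at 0)"
  unfolding pd_def using smooth_fun_line_differentiable DERIV_deriv_iff_real_differentiable by blast

text \<open>Products are not closed under partial derivatives, but by the product rule finite sums
  of products of smooth functions are.\<close>

fun sum_products :: "((real^'n::finite \<Rightarrow> real) \<times> (real^'n \<Rightarrow> real)) list \<Rightarrow> real^'n \<Rightarrow> real" where
  "sum_products [] = (\<lambda>x. 0)"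
| "sum_products ((a, b) # ps) = (\<lambda>x. a x * b x + sum_products ps x)"

fun pd_products :: "'n::finite \<Rightarrow> ((real^'n \<Rightarrow> real) \<times> (real^'n \<Rightarrow> real)) list
    \<Rightarrow> ((real^'n \<Rightarrow> real) \<times> (real^'n \<Rightarrow> real)) list" where
  "pd_products i [] = []"
| "pd_products i ((a, b) # ps) = (pd i a, b) # (a, pd i b) # pd_products i ps"

lemma sum_products_continuous_has_pd:
  assumes "\<forall>(a, b)\<in>set ps. smooth_fun a \<and> smooth_fun b"
  shows "continuous_on UNIV (sum_products ps) \<and>
    ((\<lambda>t. sum_products ps (x + t *\<^sub>R axis i 1)) has_field_derivative sum_products (pd_products i ps) x) (at 0)"
  using assms
proof (induction ps)
  case Nil
  then show ?case by (auto intro: continuous_intros)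
next
  case (Cons p ps)
  obtain a b where p: "p = (a, b)" by force
  have a: "smooth_fun a" and b: "smooth_fun b" using Cons.prems p by auto
  have IH: "continuous_on UNIV (sum_products ps)"
    "((\<lambda>t. sum_products ps (x + t *\<^sub>R axis i 1)) has_field_derivative sum_products (pd_products i ps) x) (at 0)"
    using Cons by auto
  have "continuous_on UNIV (sum_products (p # ps))"
    using IH smooth_fun_continuous_on[OF a] smooth_fun_continuous_on[OF b] unfolding p
    by (auto intro!: continuous_intros)
  moreover have "((\<lambda>t. a (x + t *\<^sub>R axis i 1) * b (x + t *\<^sub>R axis i 1) + sum_products ps (x + t *\<^sub>R axis i 1))
     has_field_derivative (pd i a x * b (x + 0 *\<^sub>R axis i 1) + pd i b x * a (x + 0 *\<^sub>R axis i 1))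
       + sum_products (pd_products i ps) x) (at 0)"
    by (intro DERIV_add DERIV_mult smooth_fun_has_pd a b IH(2))
  ultimately show ?case unfolding p by (simp add: algebra_simps)
qed

lemma smooth_fun_sum_products:
  assumes "\<forall>(a, b)\<in>set ps. smooth_fun a \<and> smooth_fun b"
  shows "smooth_fun (sum_products ps)"
proof -
  let ?S = "{h. \<exists>ps. (\<forall>(a, b)\<in>set ps. smooth_fun a \<and> smooth_fun b) \<and> h = sum_products ps}"
  have "pd_stable ?S"
    unfolding pd_stable_def
  proof (intro ballI conjI allI)
    fix h assume "h \<in> ?S"
    then obtain ps where ps: "\<forall>(a, b)\<in>set ps. smooth_fun a \<and> smooth_fun b" and h: "h = sum_products ps"
      by blast
    show "continuous_on UNIV h" using sum_products_continuous_has_pd[OF ps] h by blast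
    show "(\<lambda>t. h (x + t *\<^sub>R axis i 1)) differentiable (at 0)" for i x
      using sum_products_continuous_has_pd[OF ps, of x i] h real_differentiable_def by blast
    show "pd i h \<in> ?S" for i
    proof -
      have "pd i h = sum_products (pd_products i ps)"
        using sum_products_continuous_has_pd[OF ps] pd_eqI h by blast
      moreover have "\<forall>(a, b)\<in>set (pd_products i ps). smooth_fun a \<and> smooth_fun b"
        using ps by (induction ps rule: pd_products.induct) (auto intro: smooth_fun_pd)
      ultimately show ?thesis by blast
    qed
  qed
  then show ?thesis using pd_stable_smooth_fun assms by blast
qed

lemma pd_const: "pd i (\<lambda>x. c) x = 0"
  by (rule pd_eqI) simp

lemma pd_const_fun: "pd i (\<lambda>x. c) = (\<lambda>x. 0)"
  by (rule ext) (rule pd_const)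

lemma smooth_fun_const: "smooth_fun (\<lambda>x. c)"
proof -
  have "pd_stable (range (\<lambda>c. \<lambda>x::real^'n. c))"
    unfolding pd_stable_def
  proof (intro ballI conjI allI)
    fix h :: "real^'n \<Rightarrow> real" and i assume "h \<in> range (\<lambda>c x. c)"
    then obtain c where h: "h = (\<lambda>x. c)" by blast
    show "continuous_on UNIV h" unfolding h by (rule continuous_on_const)
    show "(\<lambda>t. h (x + t *\<^sub>R axis i 1)) differentiable (at 0)" for x unfolding h by simp
    have "pd i h = (\<lambda>x. 0)" unfolding h by (rule ext, rule pd_const)
    then show "pd i h \<in> range (\<lambda>c x. c)" by blast
  qed
  then show ?thesis using pd_stable_smooth_fun by blast
qed

lemma smooth_fun_mult: "smooth_fun f \<Longrightarrow> smooth_fun g \<Longrightarrow> smooth_fun (\<lambda>x. f x * g x)"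
  using smooth_fun_sum_products[of "[(f, g)]"] by auto

lemma smooth_fun_add: "smooth_fun f \<Longrightarrow> smooth_fun g \<Longrightarrow> smooth_fun (\<lambda>x. f x + g x)"
  using smooth_fun_sum_products[of "[(f, \<lambda>x. 1), (g, \<lambda>x. 1)]"] smooth_fun_const by auto

lemma smooth_fun_cmult: "smooth_fun f \<Longrightarrow> smooth_fun (\<lambda>x. c * f x)"
  using smooth_fun_mult[OF smooth_fun_const] by blast

lemma smooth_fun_diff: "smooth_fun f \<Longrightarrow> smooth_fun g \<Longrightarrow> smooth_fun (\<lambda>x. f x - g x)"
  using smooth_fun_add[OF _ smooth_fun_cmult[of g "-1"]] by auto

lemma smooth_fun_power: "smooth_fun f \<Longrightarrow> smooth_fun (\<lambda>x. f x ^ m)"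
  by (induction m) (auto intro: smooth_fun_mult smooth_fun_const)

lemma smooth_fun_prod:
  "finite I \<Longrightarrow> (\<And>j. j \<in> I \<Longrightarrow> smooth_fun (f j)) \<Longrightarrow> smooth_fun (\<lambda>x. \<Prod>j\<in>I. f j x)"
  by (induction I rule: finite_induct) (auto intro: smooth_fun_mult smooth_fun_const)

lemma has_pd_divide_power:
  assumes "smooth_fun a" "smooth_fun g" "g x \<noteq> 0"
  shows "((\<lambda>t. a (x + t *\<^sub>R axis i 1) / g (x + t *\<^sub>R axis i 1) ^ m) has_field_derivative
    (pd i a x * g x - of_nat m * a x * pd i g x) / g x ^ Suc m) (at 0)"
proof -
  have "((\<lambda>t. a (x + t *\<^sub>R axis i 1) / g (x + t *\<^sub>R axis i 1) ^ m) has_field_derivative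
     (pd i a x * g (x + 0 *\<^sub>R axis i 1) ^ m
       - a (x + 0 *\<^sub>R axis i 1) * (of_nat m * (pd i g x * g (x + 0 *\<^sub>R axis i 1) ^ (m - Suc 0))))
     / (g (x + 0 *\<^sub>R axis i 1) ^ m * g (x + 0 *\<^sub>R axis i 1) ^ m)) (at 0)"
    by (intro DERIV_divide DERIV_power smooth_fun_has_pd assms) (simp add: assms)
  moreover have "(pd i a x * g x ^ m - a x * (of_nat m * (pd i g x * g x ^ (m - Suc 0)))) / (g x ^ m * g x ^ m)
      = (pd i a x * g x - of_nat m * a x * pd i g x) / g x ^ Suc m"
    using assms(3) by (cases m) (simp_all add: field_simps)
  ultimately show ?thesis by simp
qed

lemma smooth_fun_divide_power:
  assumes g: "smooth_fun g" and nz: "\<And>x. g x \<noteq> 0" and a: "smooth_fun a"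
  shows "smooth_fun (\<lambda>x. a x / g x ^ m)"
proof -
  let ?S = "{h. \<exists>a m. smooth_fun a \<and> h = (\<lambda>x. a x / g x ^ m)}"
  have "pd_stable ?S"
    unfolding pd_stable_def
  proof (intro ballI conjI allI)
    fix h assume "h \<in> ?S"
    then obtain a m where a: "smooth_fun a" and h: "h = (\<lambda>x. a x / g x ^ m)" by blast
    show "continuous_on UNIV h"
      unfolding h using smooth_fun_continuous_on[OF a] smooth_fun_continuous_on[OF g] nz
      by (intro continuous_intros) auto
    show "(\<lambda>t. h (x + t *\<^sub>R axis i 1)) differentiable (at 0)" for i x
      unfolding h using has_pd_divide_power[OF a g nz] real_differentiable_def by blast
    show "pd i h \<in> ?S" for i
    proof -
      have "pd i h = (\<lambda>x. (pd i a x * g x - of_nat m * a x * pd i g x) / g x ^ Suc m)"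
        unfolding h by (intro ext pd_eqI has_pd_divide_power a g nz)
      moreover have "smooth_fun (\<lambda>x. pd i a x * g x - of_nat m * a x * pd i g x)"
        by (intro smooth_fun_diff smooth_fun_mult smooth_fun_cmult smooth_fun_pd a g)
      ultimately show ?thesis by blast
    qed
  qed
  then show ?thesis using pd_stable_smooth_fun a by blast
qed

lemma smooth_fun_divide:
  "smooth_fun a \<Longrightarrow> smooth_fun g \<Longrightarrow> (\<And>x. g x \<noteq> 0) \<Longrightarrow> smooth_fun (\<lambda>x. a x / g x)"
  using smooth_fun_divide_power[of g a 1] by simp

definition deriv_stable :: "(real \<Rightarrow> real) set \<Rightarrow> bool" where
  "deriv_stable T \<longleftrightarrow> (\<forall>h\<in>T. (\<forall>t. h differentiable (at t)) \<and> deriv h \<in> T)"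

lemma has_pd_coordinate_comp:
  assumes "h differentiable (at (s * x $ j + d))"
  shows "((\<lambda>t. c * h (s * (x + t *\<^sub>R axis i 1) $ j + d)) has_field_derivative
    (c * (s * (if j = i then 1 else 0))) * deriv h (s * x $ j + d)) (at 0)"
proof -
  have "(\<lambda>t. s * (x + t *\<^sub>R axis i 1) $ j + d) = (\<lambda>t. (s * x $ j + d) + t * (s * (if j = i then 1 else 0)))"
    by (auto simp: axis_def algebra_simps)
  then have inner: "((\<lambda>t. s * (x + t *\<^sub>R axis i 1) $ j + d) has_field_derivative s * (if j = i then 1 else 0)) (at 0)"
    by (auto intro!: derivative_eq_intros)
  have "(h has_field_derivative deriv h (s * x $ j + d)) (at (s * (x + 0 *\<^sub>R axis i 1) $ j + d))"
    using assms DERIV_deriv_iff_real_differentiable by simp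
  from DERIV_cmult[OF DERIV_chain2[OF this inner], of c] show ?thesis
    by (simp add: ac_simps)
qed

lemma pd_coordinate_comp:
  assumes "\<And>t. h differentiable (at t)"
  shows "pd i (\<lambda>x::real^'n::finite. c * h (s * x $ j + d))
    = (\<lambda>x. (c * (s * (if j = i then 1 else 0))) * deriv h (s * x $ j + d))"
  by (intro ext pd_eqI has_pd_coordinate_comp assms)

lemma smooth_fun_coordinate_comp:
  assumes T: "deriv_stable T" and hT: "h \<in> T"
  shows "smooth_fun (\<lambda>x::real^'n::finite. c * h (s * x $ j + d))"
proof -
  let ?S = "{f. \<exists>h c s d j. h \<in> T \<and> f = (\<lambda>x::real^'n. c * h (s * x $ j + d))}"
  have "pd_stable ?S"
    unfolding pd_stable_def
  proof (intro ballI conjI allI)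
    fix f assume "f \<in> ?S"
    then obtain h c s d j where h: "h \<in> T" and f: "f = (\<lambda>x::real^'n. c * h (s * x $ j + d))" by blast
    have dh: "h differentiable (at t)" "deriv h \<in> T" for t using T h unfolding deriv_stable_def by blast+
    have "continuous_on UNIV h"
      using dh(1) by (meson continuous_at_imp_continuous_on differentiable_imp_continuous_within)
    moreover have "continuous_on UNIV (\<lambda>x::real^'n. s * x $ j + d)"
      by (intro continuous_intros)
    ultimately have "continuous_on UNIV (\<lambda>x::real^'n. h (s * x $ j + d))"
      using continuous_on_compose2 by blast
    then show "continuous_on UNIV f" unfolding f by (intro continuous_intros)
    show "(\<lambda>t. f (x + t *\<^sub>R axis i 1)) differentiable (at 0)" for i x
      unfolding f using has_pd_coordinate_comp[OF dh(1)] real_differentiable_def by blast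
    show "pd i f \<in> ?S" for i
    proof -
      have "pd i f = (\<lambda>x. (c * (s * (if j = i then 1 else 0))) * deriv h (s * x $ j + d))"
        unfolding f by (rule pd_coordinate_comp[OF dh(1)])
      then show ?thesis using dh(2) by blast
    qed
  qed
  then show ?thesis using pd_stable_smooth_fun hT by blast
qed

lemma pd_cong_open:
  assumes "open V" "x \<in> V" and eq: "\<And>y. y \<in> V \<Longrightarrow> f y = g y"
  shows "pd i f x = pd i g x"
proof -
  obtain r where r: "r > 0" "ball x r \<subseteq> V" using assms(1,2) openE by blast
  have "eventually (\<lambda>t. f (x + t *\<^sub>R axis i 1) = g (x + t *\<^sub>R axis i 1)) (nhds 0)"
    unfolding eventually_nhds_metric
  proof (intro exI conjI allI impI)
    show "r > 0" by (rule r(1))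
    fix t :: real assume "dist t 0 < r"
    then have "x + t *\<^sub>R axis i 1 \<in> ball x r" by (simp add: dist_norm)
    then show "f (x + t *\<^sub>R axis i 1) = g (x + t *\<^sub>R axis i 1)" using r eq by blast
  qed
  then show ?thesis unfolding pd_def by (rule deriv_cong_ev) simp
qed

lemma pd_pd_cong_open:
  assumes "open V" "x \<in> V" "\<And>y. y \<in> V \<Longrightarrow> f y = g y"
  shows "pd i (pd j f) x = pd i (pd j g) x"
  using assms by (intro pd_cong_open[OF assms(1,2)]) (auto intro: pd_cong_open)

section \<open>Bump functions and cut-offs\<close>

text \<open>The flat function \<open>exp (- 1/t)\<close>, with a polynomial factor in \<open>1/t\<close> so that the family is
  closed under differentiation.\<close>

definition exp_bump :: "real poly \<Rightarrow> real \<Rightarrow> real" where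
  "exp_bump p t = (if 0 < t then poly p (inverse t) * exp (- inverse t) else 0)"

lemma tendsto_poly_times_exp_neg: "((\<lambda>s::real. poly p s * exp (- s)) \<longlongrightarrow> 0) at_top"
proof -
  have "((\<lambda>s. \<Sum>i\<le>degree p. coeff p i * (s ^ i / exp s)) \<longlongrightarrow> (\<Sum>i\<le>degree p. coeff p i * 0)) at_top"
    by (intro tendsto_sum tendsto_mult tendsto_const tendsto_power_div_exp_0)
  moreover have "(\<lambda>s. \<Sum>i\<le>degree p. coeff p i * (s ^ i / exp s)) = (\<lambda>s. poly p s * exp (- s))"
    by (simp add: poly_altdef exp_minus sum_distrib_right divide_inverse mult.assoc)
  ultimately show ?thesis by simp
qed

lemma exp_bump_has_derivative_0: "(exp_bump p has_field_derivative 0) (at 0)"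
proof -
  have left: "((\<lambda>y. (exp_bump p y - exp_bump p 0) / (y - 0)) \<longlongrightarrow> 0) (at_left 0)"
  proof (rule tendsto_eventually)
    show "\<forall>\<^sub>F y in at_left 0. (exp_bump p y - exp_bump p 0) / (y - 0) = (0::real)"
      unfolding eventually_at_left_field by (auto simp: exp_bump_def intro!: exI[of _ "-1"])
  qed
  have "((\<lambda>y. poly (pCons 0 p) (inverse y) * exp (- inverse y)) \<longlongrightarrow> 0) (at_right 0)"
    using filterlim_compose[OF tendsto_poly_times_exp_neg filterlim_inverse_at_top_right] .
  moreover have "\<forall>\<^sub>F y in at_right 0.
      poly (pCons 0 p) (inverse y) * exp (- inverse y) = (exp_bump p y - exp_bump p 0) / (y - 0)"
    unfolding eventually_at_right_field by (auto simp: exp_bump_def divide_inverse intro!: exI[of _ 1])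
  ultimately have right: "((\<lambda>y. (exp_bump p y - exp_bump p 0) / (y - 0)) \<longlongrightarrow> 0) (at_right 0)"
    by (rule Lim_transform_eventually)
  have "((\<lambda>y. (exp_bump p y - exp_bump p 0) / (y - 0)) \<longlongrightarrow> 0) (at 0)"
    using left right by (rule filterlim_split_at)
  then show ?thesis by (simp add: has_field_derivative_iff exp_bump_def)
qed

lemma exp_bump_has_derivative:
  "(exp_bump p has_field_derivative exp_bump ([:0, 0, 1:] * (p - pderiv p)) t) (at t)"
proof (cases t "0::real" rule: linorder_cases)
  case less
  have ev: "\<forall>\<^sub>F y in nhds t. exp_bump p y = 0"
    using eventually_nhds_in_open[of "{..<0}" t] less
    by (auto simp: exp_bump_def elim!: eventually_mono)
  have "((\<lambda>y. 0::real) has_field_derivative exp_bump ([:0, 0, 1:] * (p - pderiv p)) t) (at t)"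
    using less by (simp add: exp_bump_def)
  then show ?thesis using DERIV_cong_ev[OF refl ev refl] by blast
next
  case equal
  then show ?thesis using exp_bump_has_derivative_0 by (simp add: exp_bump_def)
next
  case greater
  have ev: "\<forall>\<^sub>F y in nhds t. exp_bump p y = poly p (inverse y) * exp (- inverse y)"
    using eventually_nhds_in_open[of "{0<..}" t] greater
    by (auto simp: exp_bump_def elim!: eventually_mono)
  have "((\<lambda>y. poly p (inverse y) * exp (- inverse y)) has_field_derivative
      (poly (pderiv p) (inverse t) * (- (inverse t ^ Suc (Suc 0)))) * exp (- inverse t)
       + (exp (- inverse t) * (- (- (inverse t ^ Suc (Suc 0))))) * poly p (inverse t)) (at t)"
    by (intro DERIV_mult DERIV_chain2[OF poly_DERIV] DERIV_chain2[OF DERIV_exp] DERIV_minus DERIV_inverse)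
       (use greater in auto)
  moreover have "(poly (pderiv p) (inverse t) * (- (inverse t ^ Suc (Suc 0)))) * exp (- inverse t)
       + (exp (- inverse t) * (- (- (inverse t ^ Suc (Suc 0))))) * poly p (inverse t)
     = exp_bump ([:0, 0, 1:] * (p - pderiv p)) t"
    using greater by (simp add: exp_bump_def poly_pCons algebra_simps power2_eq_square)
  ultimately show ?thesis using DERIV_cong_ev[OF refl ev refl] by auto
qed

lemma deriv_stable_exp_bump: "deriv_stable (range exp_bump)"
  unfolding deriv_stable_def
proof (intro ballI conjI allI)
  fix h assume "h \<in> range exp_bump"
  then obtain p where h: "h = exp_bump p" by blast
  show "h differentiable (at t)" for t
    unfolding h using exp_bump_has_derivative real_differentiable_def by blast
  have "deriv h = exp_bump ([:0, 0, 1:] * (p - pderiv p))"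
    unfolding h using exp_bump_has_derivative DERIV_imp_deriv by blast
  then show "deriv h \<in> range exp_bump" by blast
qed

lemma deriv_stable_cos_shift: "deriv_stable (range (\<lambda>\<theta>::real. \<lambda>t. cos (t + \<theta>)))"
  unfolding deriv_stable_def
proof (intro ballI conjI allI)
  fix h :: "real \<Rightarrow> real" assume "h \<in> range (\<lambda>\<theta> t. cos (t + \<theta>))"
  then obtain \<theta> where h: "h = (\<lambda>t. cos (t + \<theta>))" by blast
  have D: "(h has_field_derivative cos (t + (\<theta> + pi / 2))) (at t)" for t
  proof -
    have "(h has_field_derivative - sin (t + \<theta>)) (at t)"
      unfolding h by (auto intro!: derivative_eq_intros)
    then show ?thesis using minus_sin_cos_eq[of "t + \<theta>"] by (simp add: add.assoc)
  qed
  show "h differentiable (at t)" for t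
    using D real_differentiable_def by blast
  have "deriv h = (\<lambda>t. cos (t + (\<theta> + pi / 2)))"
    using D DERIV_imp_deriv by blast
  then show "deriv h \<in> range (\<lambda>\<theta> t. cos (t + \<theta>))" by blast
qed

lemma smooth_fun_exp_bump_coordinate: "smooth_fun (\<lambda>x::real^'n::finite. exp_bump p (s * x $ j + d))"
  using smooth_fun_coordinate_comp[OF deriv_stable_exp_bump, of "exp_bump p" 1] by simp

lemma smooth_fun_cos_coordinate: "smooth_fun (\<lambda>x::real^'n::finite. cos (s * x $ j + d))"
proof -
  have "(\<lambda>t. cos (t + 0)) \<in> range (\<lambda>\<theta>::real. \<lambda>t. cos (t + \<theta>))" by blast
  from smooth_fun_coordinate_comp[OF deriv_stable_cos_shift this, of 1] show ?thesis by simp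
qed

lemma exp_bump_1: "exp_bump 1 t = (if 0 < t then exp (- inverse t) else 0)"
  by (simp add: exp_bump_def)

lemma exp_bump_1_nonneg: "0 \<le> exp_bump 1 t"
  and exp_bump_1_le_1: "exp_bump 1 t \<le> 1"
  and exp_bump_1_pos_iff: "exp_bump 1 t > 0 \<longleftrightarrow> t > 0"
  by (auto simp: exp_bump_1)

lemma not_in_supp_eq_0: "x \<notin> supp f \<Longrightarrow> f x = 0"
  unfolding supp_def using closure_subset[of "{x. f x \<noteq> 0}"] by auto

lemma closed_supp: "closed (supp f)"
  unfolding supp_def by simp

lemma test_funI:
  assumes "smooth_fun f" "compact K" "\<And>x. f x \<noteq> 0 \<Longrightarrow> x \<in> K"
  shows "test_fun f" "supp f \<subseteq> K"
proof -
  show sK: "supp f \<subseteq> K"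
    unfolding supp_def using assms(3) compact_imp_closed[OF assms(2)] by (intro closure_minimal) auto
  have "compact (K \<inter> supp f)" using assms(2) closed_supp by (rule compact_Int_closed)
  with sK have "compact (supp f)" by (simp add: Int_absorb1)
  then show "test_fun f" unfolding test_fun_def using assms(1) by blast
qed

lemma test_fun_continuous_on: "test_fun \<psi> \<Longrightarrow> continuous_on UNIV \<psi>"
  unfolding test_fun_def by (blast intro: smooth_fun_continuous_on)

definition box_bump :: "real^'n::finite \<Rightarrow> real^'n \<Rightarrow> real^'n \<Rightarrow> real" where
  "box_bump a b x = (\<Prod>j\<in>UNIV. exp_bump 1 (x $ j - a $ j) * exp_bump 1 (b $ j - x $ j))"

lemma smooth_fun_box_bump: "smooth_fun (box_bump a b)"
proof -
  have "smooth_fun (\<lambda>x. exp_bump 1 (x $ j - a $ j) * exp_bump 1 (b $ j - x $ j))" for j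
    using smooth_fun_mult[OF smooth_fun_exp_bump_coordinate[of 1 1 j "- a $ j"]
        smooth_fun_exp_bump_coordinate[of 1 "-1" j "b $ j"]]
    by simp
  then show ?thesis unfolding box_bump_def by (intro smooth_fun_prod) auto
qed

lemma box_bump_nonneg: "0 \<le> box_bump a b x"
  and box_bump_le_1: "box_bump a b x \<le> 1"
  unfolding box_bump_def
  by (auto intro!: prod_nonneg prod_le_1 mult_nonneg_nonneg mult_le_one exp_bump_1_nonneg exp_bump_1_le_1)

lemma box_bump_pos_iff: "box_bump a b x > 0 \<longleftrightarrow> x \<in> box a b"
proof
  assume "box_bump a b x > 0"
  then have "\<forall>j. exp_bump 1 (x $ j - a $ j) * exp_bump 1 (b $ j - x $ j) \<noteq> 0"
    unfolding box_bump_def by (metis (no_types, lifting) UNIV_I finite_class.finite_UNIV less_irrefl prod_zero_iff)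
  then show "x \<in> box a b" unfolding mem_box_cart by (auto simp: exp_bump_1 split: if_splits)
next
  assume "x \<in> box a b"
  then show "box_bump a b x > 0" unfolding box_bump_def mem_box_cart
    by (intro prod_pos mult_pos_pos) (auto simp: exp_bump_1_pos_iff)
qed

lemma box_bump_eq_0: "x \<notin> box a b \<Longrightarrow> box_bump a b x = 0"
  using box_bump_pos_iff[of a b x] box_bump_nonneg[of a b x] by linarith

definition smooth_step :: "real \<Rightarrow> real" where
  "smooth_step t = exp_bump 1 t / (exp_bump 1 t + exp_bump 1 (1 - t))"

lemma smooth_step_denominator_pos: "exp_bump 1 t + exp_bump 1 (1 - t) > 0"
  by (cases "t > 0") (auto simp: exp_bump_1 add_pos_nonneg add_nonneg_pos)

lemma smooth_fun_smooth_step_coordinate: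
  "smooth_fun (\<lambda>x::real^'n::finite. smooth_step (s * x $ j + d))"
proof -
  have "smooth_fun (\<lambda>x::real^'n. exp_bump 1 (s * x $ j + d)
      / (exp_bump 1 (s * x $ j + d) + exp_bump 1 ((- s) * x $ j + (1 - d))))"
  proof (intro smooth_fun_divide smooth_fun_add smooth_fun_exp_bump_coordinate)
    fix x :: "real^'n"
    show "exp_bump 1 (s * x $ j + d) + exp_bump 1 ((- s) * x $ j + (1 - d)) \<noteq> 0"
      using smooth_step_denominator_pos[of "s * x $ j + d"] by (simp add: algebra_simps)
  qed
  then show ?thesis by (simp add: smooth_step_def algebra_simps)
qed

lemma smooth_step_eq_1: "t \<ge> 1 \<Longrightarrow> smooth_step t = 1"
  and smooth_step_eq_0: "t \<le> 0 \<Longrightarrow> smooth_step t = 0"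
  by (auto simp: smooth_step_def exp_bump_1)

definition box_cutoff :: "real^'n::finite \<Rightarrow> real^'n \<Rightarrow> real^'n \<Rightarrow> real" where
  "box_cutoff a b x = (\<Prod>j\<in>UNIV. smooth_step (x $ j - a $ j + 1) * smooth_step (b $ j - x $ j + 1))"

lemma smooth_fun_box_cutoff: "smooth_fun (box_cutoff a b)"
proof -
  have "smooth_fun (\<lambda>x. smooth_step (x $ j - a $ j + 1) * smooth_step (b $ j - x $ j + 1))" for j
    using smooth_fun_mult[OF smooth_fun_smooth_step_coordinate[of 1 j "1 - a $ j"]
        smooth_fun_smooth_step_coordinate[of "-1" j "b $ j + 1"]]
    by (simp add: algebra_simps)
  then show ?thesis unfolding box_cutoff_def by (intro smooth_fun_prod) auto
qed

lemma box_cutoff_eq_1: "x \<in> cbox a b \<Longrightarrow> box_cutoff a b x = 1"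
  unfolding box_cutoff_def mem_box_cart by (intro prod.neutral ballI) (simp add: smooth_step_eq_1)

lemma box_cutoff_nonzero: "box_cutoff a b x \<noteq> 0 \<Longrightarrow> x \<in> cbox (a - 1) (b + 1)"
proof -
  assume "box_cutoff a b x \<noteq> 0"
  then have "\<forall>j. smooth_step (x $ j - a $ j + 1) \<noteq> 0 \<and> smooth_step (b $ j - x $ j + 1) \<noteq> 0"
    unfolding box_cutoff_def
    by (metis (no_types, lifting) UNIV_I finite_class.finite_UNIV mult_zero_left mult_zero_right prod_zero_iff)
  then have "\<forall>j. x $ j - a $ j + 1 > 0 \<and> b $ j - x $ j + 1 > 0"
    using smooth_step_eq_0 by (meson not_le)
  then show ?thesis unfolding mem_box_cart by (simp add: algebra_simps less_imp_le)
qed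

lemma test_fun_eq_near_bounded:
  assumes f: "smooth_fun f" and S: "bounded S"
  obtains \<psi> V where "test_fun \<psi>" "open V" "S \<subseteq> V" "\<And>x. x \<in> V \<Longrightarrow> \<psi> x = f x"
proof -
  obtain c where c: "S \<subseteq> cbox (- c) c" using bounded_subset_cbox_symmetric[OF S] by blast
  let ?\<psi> = "\<lambda>x. box_cutoff (- c - 1) (c + 1) x * f x"
  have "test_fun ?\<psi>"
  proof (rule test_funI(1)[OF _ compact_cbox])
    show "smooth_fun ?\<psi>" by (intro smooth_fun_mult smooth_fun_box_cutoff f)
    show "?\<psi> x \<noteq> 0 \<Longrightarrow> x \<in> cbox (- c - 1 - 1) (c + 1 + 1)" for x
      using box_cutoff_nonzero by fastforce
  qed
  moreover have "S \<subseteq> box (- c - 1) (c + 1)"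
    using c unfolding subset_eq mem_box_cart by (auto simp: algebra_simps) (smt (verit))+
  moreover have "?\<psi> x = f x" if "x \<in> box (- c - 1) (c + 1)" for x
    using that box_subset_cbox box_cutoff_eq_1 by fastforce
  ultimately show ?thesis using that[OF _ open_box] by blast
qed

section \<open>Test functions approximating the indicator of an open set\<close>

lemma open_rational_box_cover:
  fixes U :: "(real^'n::finite) set"
  assumes "open U" "x \<in> U"
  obtains a b where "\<forall>i. a $ i \<in> \<rat>" "\<forall>i. b $ i \<in> \<rat>" "cbox a b \<subseteq> U" "x \<in> box a b"
proof -
  obtain e where e: "e > 0" "ball x e \<subseteq> U" using assms openE by blast
  obtain a b :: "real^'n" where ab: "\<forall>i\<in>Basis. a \<bullet> i \<in> \<rat> \<and> b \<bullet> i \<in> \<rat>" "x \<in> box a b"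
    "box a b \<subseteq> ball x (e / 2)"
    using rational_boxes[of "e / 2" x] e by auto
  have "axis i 1 \<in> (Basis :: (real^'n) set)" for i
    by simp
  then have rat: "\<forall>i. a $ i \<in> \<rat>" "\<forall>i. b $ i \<in> \<rat>"
    using ab(1) by (auto simp: cart_eq_inner_axis)
  have "box a b \<noteq> {}" using ab(2) by blast
  then have "cbox a b = closure (box a b)" by (simp add: closure_box)
  also have "\<dots> \<subseteq> closure (ball x (e / 2))" by (rule closure_mono[OF ab(3)])
  also have "\<dots> = cball x (e / 2)" using e by (simp add: closure_ball)
  also have "\<dots> \<subseteq> U" using e by (auto simp: subset_eq)
  finally show ?thesis using that rat ab(2) by blast
qed

lemma open_box_sequence_cover:
  fixes U :: "(real^'n::finite) set"
  assumes "open U" "U \<noteq> {}"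
  obtains a b :: "nat \<Rightarrow> real^'n"
  where "\<And>l. cbox (a l) (b l) \<subseteq> U" "\<And>x. x \<in> U \<Longrightarrow> \<exists>l. x \<in> box (a l) (b l)"
proof -
  define Q where "Q = {v::real^'n. \<forall>i. v $ i \<in> \<rat>}"
  define R where "R = {p \<in> Q \<times> Q. cbox (fst p) (snd p) \<subseteq> U}"
  have "countable Q" unfolding Q_def by (rule countable_vector) (rule countable_rat)
  then have "countable (Q \<times> Q)" by simp
  moreover have "R \<subseteq> Q \<times> Q" unfolding R_def by blast
  ultimately have cR: "countable R" by (rule countable_subset[rotated])
  have cover: "\<exists>q\<in>R. x \<in> box (fst q) (snd q)" if x: "x \<in> U" for x
  proof -
    obtain a b where "\<forall>i. a $ i \<in> \<rat>" "\<forall>i. b $ i \<in> \<rat>" "cbox a b \<subseteq> U" "x \<in> box a b"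
      using open_rational_box_cover[OF assms(1) x] by blast
    then show ?thesis unfolding R_def Q_def by (intro bexI[of _ "(a, b)"]) auto
  qed
  then have "R \<noteq> {}" using assms(2) by blast
  then have R: "from_nat_into R l \<in> R" for l by (rule from_nat_into)
  show ?thesis
  proof (rule that[of "\<lambda>l. fst (from_nat_into R l)" "\<lambda>l. snd (from_nat_into R l)"])
    show "cbox (fst (from_nat_into R l)) (snd (from_nat_into R l)) \<subseteq> U" for l
      using R unfolding R_def by blast
    show "\<exists>l. x \<in> box (fst (from_nat_into R l)) (snd (from_nat_into R l))" if "x \<in> U" for x
      using cover[OF that] from_nat_into_surj[OF cR] by metis
  qed
qed

lemma LIMSEQ_prod_one_minus_power:
  fixes b :: "nat \<Rightarrow> real"
  assumes b0: "\<And>l. 0 \<le> b l" and b1: "\<And>l. b l \<le> 1" and pos: "0 < b L"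
  shows "(\<lambda>j. \<Prod>l<j. (1 - b l) ^ j) \<longlonglongrightarrow> 0"
proof -
  have F01: "0 \<le> (1 - b l) ^ j" "(1 - b l) ^ j \<le> 1" for l j
    using b0[of l] b1[of l] by (auto intro: power_le_one)
  have lim: "(\<lambda>j. (1 - b L) ^ j) \<longlonglongrightarrow> 0"
    using b1[of L] pos by (intro LIMSEQ_power_zero) simp
  have lower: "\<forall>\<^sub>F j in sequentially. 0 \<le> (\<Prod>l<j. (1 - b l) ^ j)"
    by (intro always_eventually allI prod_nonneg ballI F01(1))
  have upper: "\<forall>\<^sub>F j in sequentially. (\<Prod>l<j. (1 - b l) ^ j) \<le> (1 - b L) ^ j"
    unfolding eventually_sequentially
  proof (intro exI allI impI)
    fix j assume "Suc L \<le> j"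
    then have "(\<Prod>l<j. (1 - b l) ^ j) = (1 - b L) ^ j * (\<Prod>l\<in>{..<j} - {L}. (1 - b l) ^ j)"
      by (subst prod.remove[of _ L]) auto
    also have "\<dots> \<le> (1 - b L) ^ j * 1"
      by (intro mult_left_mono prod_le_1) (use F01 in auto)
    finally show "(\<Prod>l<j. (1 - b l) ^ j) \<le> (1 - b L) ^ j" by simp
  qed
  show ?thesis by (rule tendsto_sandwich[OF lower upper tendsto_const lim])
qed

text \<open>For boxes \<open>B\<^sub>l\<close> covering an open set \<open>U\<close> with closures inside \<open>U\<close>, these functions
  converge pointwise to the indicator of \<open>U\<close>: at \<open>x \<in> B\<^sub>L\<close> the single factor
  \<open>(1 - bump\<^sub>L x)\<^sup>j\<close> already tends to \<open>0\<close>.\<close>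

definition box_union_bump :: "(nat \<Rightarrow> real^'n::finite) \<Rightarrow> (nat \<Rightarrow> real^'n) \<Rightarrow> nat \<Rightarrow> real^'n \<Rightarrow> real" where
  "box_union_bump a b j x = 1 - (\<Prod>l<j. (1 - box_bump (a l) (b l) x) ^ j)"

lemma box_union_bump_nonneg: "0 \<le> box_union_bump a b j x"
  and box_union_bump_le_1: "box_union_bump a b j x \<le> 1"
proof -
  have "0 \<le> (1 - box_bump (a l) (b l) x) ^ j \<and> (1 - box_bump (a l) (b l) x) ^ j \<le> 1" for l
    using box_bump_nonneg[of "a l" "b l" x] box_bump_le_1[of "a l" "b l" x] by (auto intro: power_le_one)
  then have "0 \<le> (\<Prod>l<j. (1 - box_bump (a l) (b l) x) ^ j)" "(\<Prod>l<j. (1 - box_bump (a l) (b l) x) ^ j) \<le> 1"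
    by (auto intro!: prod_nonneg prod_le_1)
  then show "0 \<le> box_union_bump a b j x" "box_union_bump a b j x \<le> 1"
    unfolding box_union_bump_def by auto
qed

lemma test_fun_box_union_bump:
  "test_fun (box_union_bump a b j)" "supp (box_union_bump a b j) \<subseteq> (\<Union>l<j. cbox (a l) (b l))"
proof -
  have sm: "smooth_fun (box_union_bump a b j)"
    unfolding box_union_bump_def
    by (intro smooth_fun_diff smooth_fun_const smooth_fun_prod smooth_fun_power smooth_fun_box_bump) simp
  have cK: "compact (\<Union>l<j. cbox (a l) (b l))" by (intro compact_UN) auto
  have nz: "x \<in> (\<Union>l<j. cbox (a l) (b l))" if "box_union_bump a b j x \<noteq> 0" for x
  proof (rule ccontr)
    assume "x \<notin> (\<Union>l<j. cbox (a l) (b l))"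
    then have "box_bump (a l) (b l) x = 0" if "l < j" for l
      using that box_subset_cbox by (intro box_bump_eq_0) blast
    then show False using \<open>box_union_bump a b j x \<noteq> 0\<close> unfolding box_union_bump_def by simp
  qed
  show "test_fun (box_union_bump a b j)" "supp (box_union_bump a b j) \<subseteq> (\<Union>l<j. cbox (a l) (b l))"
    using test_funI[OF sm cK nz] by auto
qed

lemma LIMSEQ_box_union_bump:
  assumes "x \<in> box (a L) (b L)"
  shows "(\<lambda>j. box_union_bump a b j x) \<longlonglongrightarrow> 1"
proof -
  have "(\<lambda>j. \<Prod>l<j. (1 - box_bump (a l) (b l) x) ^ j) \<longlonglongrightarrow> 0"
    using assms by (intro LIMSEQ_prod_one_minus_power box_bump_nonneg box_bump_le_1) (simp add: box_bump_pos_iff)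
  then have "(\<lambda>j. 1 - (\<Prod>l<j. (1 - box_bump (a l) (b l) x) ^ j)) \<longlonglongrightarrow> 1 - 0"
    by (intro tendsto_diff tendsto_const)
  then show ?thesis unfolding box_union_bump_def by simp
qed

lemma test_fun_approximate_indicator:
  fixes U :: "(real^'n::finite) set"
  assumes "open U"
  obtains \<eta> :: "nat \<Rightarrow> real^'n \<Rightarrow> real" where
    "\<And>j. test_fun (\<eta> j)" "\<And>j. supp (\<eta> j) \<subseteq> U" "\<And>j x. 0 \<le> \<eta> j x" "\<And>j x. \<eta> j x \<le> 1"
    "\<And>x. x \<in> U \<Longrightarrow> (\<lambda>j. \<eta> j x) \<longlonglongrightarrow> 1"
proof (cases "U = {}")
  case True
  have "test_fun (\<lambda>x::real^'n. 0::real)" "supp (\<lambda>x::real^'n. 0::real) \<subseteq> {}"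
    by (rule test_funI[OF smooth_fun_const compact_empty], simp)+
  then show ?thesis using that[of "\<lambda>j x. 0"] True by auto
next
  case False
  obtain a b :: "nat \<Rightarrow> real^'n" where
    ab: "\<And>l. cbox (a l) (b l) \<subseteq> U" and cover: "\<And>x. x \<in> U \<Longrightarrow> \<exists>l. x \<in> box (a l) (b l)"
    using open_box_sequence_cover[OF assms False] by blast
  show ?thesis
  proof (rule that[of "box_union_bump a b"])
    show "supp (box_union_bump a b j) \<subseteq> U" for j
      using test_fun_box_union_bump(2)[of a b j] ab by blast
    show "(\<lambda>j. box_union_bump a b j x) \<longlonglongrightarrow> 1" if "x \<in> U" for x
      using cover[OF that] LIMSEQ_box_union_bump by blast
  qed (simp_all add: test_fun_box_union_bump box_union_bump_nonneg box_union_bump_le_1)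
qed

lemma continuous_on_borel_measurable_lborel:
  "continuous_on UNIV (f :: real^'n::finite \<Rightarrow> real) \<Longrightarrow> f \<in> borel_measurable lborel"
  using borel_measurable_continuous_onI by (simp add: measurable_lborel1)

lemma L2_integrable_mult_compact_support:
  fixes u :: "real^'n::finite \<Rightarrow> complex"
  assumes u: "L2 u" and c: "continuous_on UNIV \<rho>" and K: "compact K" and z: "\<And>x. x \<notin> K \<Longrightarrow> \<rho> x = 0"
  shows "integrable lborel (\<lambda>x. u x * of_real (\<rho> x))"
proof -
  have "bounded (\<rho> ` K)"
    using compact_continuous_image[OF continuous_on_subset[OF c] K] compact_imp_bounded by blast
  then obtain M where M: "M > 0" "\<And>x. x \<in> K \<Longrightarrow> norm (\<rho> x) \<le> M"
    unfolding bounded_pos by auto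
  have um: "u \<in> borel_measurable lborel" and ui: "integrable lborel (\<lambda>x. (cmod (u x))\<^sup>2)"
    using u unfolding L2_def by auto
  have "integrable lborel (indicat_real K)"
  proof (rule integrable_real_indicator)
    show "K \<in> sets lborel" using borel_closed[OF compact_imp_closed[OF K]] by simp
    show "emeasure lborel K < \<infinity>" using K compact_imp_bounded emeasure_bounded_finite by blast
  qed
  then have bound: "integrable lborel (\<lambda>x. M * (indicat_real K x + (cmod (u x))\<^sup>2))"
    by (intro integrable_mult_right Bochner_Integration.integrable_add ui)
  show ?thesis
  proof (rule Bochner_Integration.integrable_bound[OF bound])
    show "(\<lambda>x. u x * complex_of_real (\<rho> x)) \<in> borel_measurable lborel"
      using um continuous_on_borel_measurable_lborel[OF c] by measurable
    show "AE x in lborel. norm (u x * complex_of_real (\<rho> x)) \<le> norm (M * (indicat_real K x + (cmod (u x))\<^sup>2))"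
    proof (rule AE_I2)
      fix x
      show "norm (u x * complex_of_real (\<rho> x)) \<le> norm (M * (indicat_real K x + (cmod (u x))\<^sup>2))"
      proof (cases "x \<in> K")
        case True
        have "cmod (u x) \<le> 1 + (cmod (u x))\<^sup>2"
        proof (cases "cmod (u x) \<le> 1")
          case False
          then have "cmod (u x) * 1 \<le> cmod (u x) * cmod (u x)" by (intro mult_left_mono) auto
          then show ?thesis by (simp add: power2_eq_square)
        qed (simp add: add_increasing2)
        with M(2)[OF True] have "cmod (u x) * norm (\<rho> x) \<le> (1 + (cmod (u x))\<^sup>2) * M"
          by (intro mult_mono) auto
        then show ?thesis using True M by (simp add: norm_mult abs_mult algebra_simps)
      qed (use z in simp)
    qed
  qed
qed

lemma LIMSEQ_integral_approximate_indicator: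
  fixes F :: "real^'n::finite \<Rightarrow> complex"
  assumes F: "F \<in> borel_measurable lborel" and \<rho>: "continuous_on UNIV \<rho>"
    and int: "integrable lborel (\<lambda>x. indicator U x *\<^sub>R (F x * of_real (\<rho> x)))"
    and \<eta>: "\<And>j. continuous_on UNIV (\<eta> j)" "\<And>j x. 0 \<le> \<eta> j x" "\<And>j x. \<eta> j x \<le> 1"
      "\<And>j x. x \<notin> U \<Longrightarrow> \<eta> j x = 0" "\<And>x. x \<in> U \<Longrightarrow> (\<lambda>j. \<eta> j x) \<longlonglongrightarrow> 1"
  shows "(\<lambda>j. \<integral>x. F x * of_real (\<eta> j x * \<rho> x) \<partial>lborel)
    \<longlonglongrightarrow> (\<integral>x. indicator U x *\<^sub>R (F x * of_real (\<rho> x)) \<partial>lborel)"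
proof (rule integral_dominated_convergence[where w="\<lambda>x. norm (indicator U x *\<^sub>R (F x * of_real (\<rho> x)))"])
  show "(\<lambda>x. indicator U x *\<^sub>R (F x * of_real (\<rho> x))) \<in> borel_measurable lborel"
    using int by (rule borel_measurable_integrable)
  show "(\<lambda>x. F x * of_real (\<eta> j x * \<rho> x)) \<in> borel_measurable lborel" for j
    using F continuous_on_borel_measurable_lborel[OF \<eta>(1)] continuous_on_borel_measurable_lborel[OF \<rho>]
    by measurable
  show "integrable lborel (\<lambda>x. norm (indicator U x *\<^sub>R (F x * of_real (\<rho> x))))"
    using int by (rule integrable_norm)
  show "AE x in lborel. (\<lambda>j. F x * of_real (\<eta> j x * \<rho> x)) \<longlonglongrightarrow> indicator U x *\<^sub>R (F x * of_real (\<rho> x))"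
  proof (rule AE_I2)
    fix x show "(\<lambda>j. F x * of_real (\<eta> j x * \<rho> x)) \<longlonglongrightarrow> indicator U x *\<^sub>R (F x * of_real (\<rho> x))"
    proof (cases "x \<in> U")
      case True
      have "(\<lambda>j. F x * of_real (\<eta> j x * \<rho> x)) \<longlonglongrightarrow> F x * of_real (1 * \<rho> x)"
        by (intro tendsto_intros \<eta>(5) True)
      then show ?thesis using True by simp
    qed (simp add: \<eta>(4))
  qed
  show "AE x in lborel. norm (F x * of_real (\<eta> j x * \<rho> x)) \<le> norm (indicator U x *\<^sub>R (F x * of_real (\<rho> x)))" for j
  proof (rule AE_I2)
    fix x show "norm (F x * of_real (\<eta> j x * \<rho> x)) \<le> norm (indicator U x *\<^sub>R (F x * of_real (\<rho> x)))"
    proof (cases "x \<in> U")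
      case True
      have "cmod (F x) * (\<bar>\<eta> j x\<bar> * \<bar>\<rho> x\<bar>) \<le> cmod (F x) * (1 * \<bar>\<rho> x\<bar>)"
        using \<eta>(2,3)[of j x] by (intro mult_left_mono mult_right_mono) auto
      then show ?thesis using True by (simp add: norm_mult)
    qed (simp add: \<eta>(4))
  qed
qed

lemma integral_indicator_eq_0_if_vanishing_distribution:
  fixes F :: "real^'n::finite \<Rightarrow> complex"
  assumes U: "open U" and F: "F \<in> borel_measurable lborel" and \<rho>: "smooth_fun \<rho>"
    and int: "integrable lborel (\<lambda>x. indicator U x *\<^sub>R (F x * of_real (\<rho> x)))"
    and vanish: "\<And>\<psi>. test_fun \<psi> \<Longrightarrow> supp \<psi> \<subseteq> U \<Longrightarrow> (\<integral>x. F x * of_real (\<psi> x) \<partial>lborel) = 0"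
  shows "(\<integral>x. indicator U x *\<^sub>R (F x * of_real (\<rho> x)) \<partial>lborel) = 0"
proof -
  obtain \<eta> :: "nat \<Rightarrow> real^'n \<Rightarrow> real" where
    \<eta>: "\<And>j. test_fun (\<eta> j)" "\<And>j. supp (\<eta> j) \<subseteq> U" "\<And>j x. 0 \<le> \<eta> j x" "\<And>j x. \<eta> j x \<le> 1"
    "\<And>x. x \<in> U \<Longrightarrow> (\<lambda>j. \<eta> j x) \<longlonglongrightarrow> 1"
    using test_fun_approximate_indicator[OF U] by blast
  have \<eta>_out: "\<eta> j x = 0" if "x \<notin> U" for j x
    using \<eta>(2) not_in_supp_eq_0 that by blast
  have "(\<integral>x. F x * of_real (\<eta> j x * \<rho> x) \<partial>lborel) = 0" for j
  proof -
    have nz: "\<eta> j x * \<rho> x \<noteq> 0 \<Longrightarrow> x \<in> supp (\<eta> j)" for x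
      using not_in_supp_eq_0[of x "\<eta> j"] by auto
    have sm: "smooth_fun (\<lambda>x. \<eta> j x * \<rho> x)"
      using \<eta>(1) \<rho> unfolding test_fun_def by (blast intro: smooth_fun_mult)
    have cK: "compact (supp (\<eta> j))" using \<eta>(1) unfolding test_fun_def by blast
    note T = test_funI[OF sm cK nz]
    have "supp (\<lambda>x. \<eta> j x * \<rho> x) \<subseteq> U" using T(2) \<eta>(2)[of j] by (rule order_trans)
    with T(1) show ?thesis by (rule vanish)
  qed
  moreover have "(\<lambda>j. \<integral>x. F x * of_real (\<eta> j x * \<rho> x) \<partial>lborel)
      \<longlonglongrightarrow> (\<integral>x. indicator U x *\<^sub>R (F x * of_real (\<rho> x)) \<partial>lborel)"
    by (rule LIMSEQ_integral_approximate_indicator[OF F smooth_fun_continuous_on[OF \<rho>] int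
        test_fun_continuous_on[OF \<eta>(1)] \<eta>(3,4) \<eta>_out \<eta>(5)])
  ultimately have "(\<lambda>j. 0) \<longlonglongrightarrow> (\<integral>x. indicator U x *\<^sub>R (F x * of_real (\<rho> x)) \<partial>lborel)" by simp
  from LIMSEQ_unique[OF tendsto_const this] show ?thesis by simp
qed

section \<open>The boundary of a Lipschitz domain is a null set\<close>

lemma negligible_lipschitz_graph:
  fixes e :: "real^'n::finite" and \<gamma> :: "real^'n \<Rightarrow> real"
  assumes e: "norm e = 1" and L: "L-lipschitz_on UNIV \<gamma>"
  shows "negligible {x. x \<bullet> e = \<gamma> (x - (x \<bullet> e) *\<^sub>R e)}"
proof -
  define H where "H = {p::real^'n. e \<bullet> p = 0}"
  define f where "f p = p + \<gamma> p *\<^sub>R e" for p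
  have "negligible H" unfolding H_def using e by (intro negligible_hyperplane) auto
  then have "negligible (f ` H)"
  proof (rule negligible_locally_Lipschitz_image[OF order_refl])
    fix x
    show "\<exists>T B. open T \<and> x \<in> T \<and> (\<forall>y\<in>H \<inter> T. norm (f y - f x) \<le> B * norm (y - x))"
    proof (intro exI[of _ UNIV] exI[of _ "1 + L"] conjI ballI)
      fix y
      have "norm (f y - f x) = norm ((y - x) + (\<gamma> y - \<gamma> x) *\<^sub>R e)" unfolding f_def by (simp add: algebra_simps)
      also have "\<dots> \<le> norm (y - x) + dist (\<gamma> y) (\<gamma> x)"
        using norm_triangle_ineq[of "y - x" "(\<gamma> y - \<gamma> x) *\<^sub>R e"] e by (simp add: dist_real_def)
      also have "dist (\<gamma> y) (\<gamma> x) \<le> L * dist y x" using lipschitz_onD[OF L] by simp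
      finally show "norm (f y - f x) \<le> (1 + L) * norm (y - x)" by (simp add: dist_norm algebra_simps)
    qed auto
  qed
  moreover have "{x. x \<bullet> e = \<gamma> (x - (x \<bullet> e) *\<^sub>R e)} \<subseteq> f ` H"
  proof
    fix x assume x: "x \<in> {x. x \<bullet> e = \<gamma> (x - (x \<bullet> e) *\<^sub>R e)}"
    have "e \<bullet> e = 1" using e by (simp add: dot_square_norm)
    then have "x - (x \<bullet> e) *\<^sub>R e \<in> H" unfolding H_def by (simp add: inner_diff_right inner_commute)
    moreover have "f (x - (x \<bullet> e) *\<^sub>R e) = x" using x unfolding f_def by simp
    ultimately show "x \<in> f ` H" by force
  qed
  ultimately show ?thesis by (rule negligible_subset)
qed

lemma lipschitz_domain_frontier_locally_negligible:
  fixes \<Omega> :: "(real^'n::finite) set"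
  assumes "lipschitz_domain \<Omega>" "x0 \<in> frontier \<Omega>"
  shows "\<exists>r>0. negligible (frontier \<Omega> \<inter> ball x0 r)"
proof -
  have op: "open \<Omega>" using assms(1) unfolding lipschitz_domain_def by blast
  obtain r e \<gamma> L where r: "r > 0" and e: "norm e = 1" and L: "L-lipschitz_on UNIV \<gamma>"
    and eq: "\<Omega> \<inter> ball x0 r = {x \<in> ball x0 r. x \<bullet> e > \<gamma> (x - (x \<bullet> e) *\<^sub>R e)}"
    using assms unfolding lipschitz_domain_def by blast
  define h where "h x = x \<bullet> e - \<gamma> (x - (x \<bullet> e) *\<^sub>R e)" for x
  have c\<gamma>: "continuous_on UNIV \<gamma>" using L by (rule lipschitz_on_continuous_on)
  have ch: "continuous_on UNIV h"
    unfolding h_def by (intro continuous_intros continuous_on_compose2[OF c\<gamma>]) auto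
  have "frontier \<Omega> \<inter> ball x0 r \<subseteq> {x. h x = 0}"
  proof
    fix x assume x: "x \<in> frontier \<Omega> \<inter> ball x0 r"
    have "x \<notin> \<Omega>" using x op by (simp add: frontier_def interior_open)
    then have "x \<notin> \<Omega> \<inter> ball x0 r" by blast
    then have le: "h x \<le> 0" using x eq unfolding h_def by auto
    have "x \<in> ball x0 r \<inter> closure \<Omega>" using x by (simp add: frontier_def)
    also have "\<dots> \<subseteq> closure (ball x0 r \<inter> \<Omega>)" by (rule open_Int_closure_subset) simp
    also have "\<dots> \<subseteq> {y. 0 \<le> h y}"
    proof (rule closure_minimal)
      show "ball x0 r \<inter> \<Omega> \<subseteq> {y. 0 \<le> h y}"
      proof
        fix y assume "y \<in> ball x0 r \<inter> \<Omega>"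
        then have "y \<in> \<Omega> \<inter> ball x0 r" by blast
        then show "y \<in> {y. 0 \<le> h y}" using eq unfolding h_def by auto
      qed
      show "closed {y. 0 \<le> h y}" using ch by (intro closed_Collect_le continuous_intros) auto
    qed
    finally show "x \<in> {x. h x = 0}" using le by simp
  qed
  moreover have "{x. h x = 0} = {x. x \<bullet> e = \<gamma> (x - (x \<bullet> e) *\<^sub>R e)}" unfolding h_def by simp
  ultimately have "negligible (frontier \<Omega> \<inter> ball x0 r)"
    using negligible_subset negligible_lipschitz_graph[OF e L] by metis
  then show ?thesis using r by blast
qed

lemma lipschitz_domain_frontier_null:
  fixes \<Omega> :: "(real^'n::finite) set"
  assumes ld: "lipschitz_domain \<Omega>" and bd: "bounded \<Omega>"
  shows "frontier \<Omega> \<in> null_sets lborel"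
proof -
  obtain r where r: "\<And>x0. x0 \<in> frontier \<Omega> \<Longrightarrow> r x0 > 0 \<and> negligible (frontier \<Omega> \<inter> ball x0 (r x0))"
    using lipschitz_domain_frontier_locally_negligible[OF ld] by metis
  have cf: "compact (frontier \<Omega>)" using bd by (rule compact_frontier_bounded)
  have "frontier \<Omega> \<subseteq> (\<Union>x0\<in>frontier \<Omega>. ball x0 (r x0))"
    using r by force
  then obtain C where C: "C \<subseteq> frontier \<Omega>" "finite C" "frontier \<Omega> \<subseteq> (\<Union>x0\<in>C. ball x0 (r x0))"
    using compactE_image[OF cf, of "frontier \<Omega>" "\<lambda>x0. ball x0 (r x0)"] by blast
  then have "frontier \<Omega> = (\<Union>x0\<in>C. frontier \<Omega> \<inter> ball x0 (r x0))" by blast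
  moreover have "negligible (\<Union>x0\<in>C. frontier \<Omega> \<inter> ball x0 (r x0))"
    using C r by (intro negligible_Union) auto
  ultimately have "negligible (frontier \<Omega>)" by simp
  then show ?thesis
    using borel_closed[OF frontier_closed] by (auto simp: null_sets_completion_iff negligible_iff_null_sets)
qed

section \<open>The Helmholtz operator\<close>

definition helmholtz_op :: "real \<Rightarrow> (real^'n::finite \<Rightarrow> real) \<Rightarrow> real^'n \<Rightarrow> real" where
  "helmholtz_op k \<psi> x = (\<Sum>i\<in>UNIV. pd i (pd i \<psi>) x) + k\<^sup>2 * \<psi> x"

lemma helmholtz_eq_iff:
  "helmholtz_eq \<Omega> k u \<phi> \<longleftrightarrow> (\<forall>\<psi>. test_fun \<psi> \<and> supp \<psi> \<subseteq> \<Omega> \<longrightarrow>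
     (\<integral>x. u x * of_real (helmholtz_op k \<psi> x) \<partial>lborel) = (\<integral>x. \<phi> x * of_real (\<psi> x) \<partial>lborel))"
  by (simp add: helmholtz_eq_def helmholtz_op_def)

lemma helmholtz_op_cong_open:
  assumes "open V" "x \<in> V" "\<And>y. y \<in> V \<Longrightarrow> f y = g y"
  shows "helmholtz_op k f x = helmholtz_op k g x"
  using pd_pd_cong_open[OF assms] assms(2,3) by (simp add: helmholtz_op_def)

lemma pd_pd_eq_0_outside_supp:
  assumes "x \<notin> supp \<psi>"
  shows "pd i (pd j \<psi>) x = 0"
proof -
  have "pd i (pd j \<psi>) x = pd i (pd j (\<lambda>y. 0)) x"
    using assms closed_supp not_in_supp_eq_0 by (intro pd_pd_cong_open[of "- supp \<psi>"]) auto
  then show ?thesis by (simp add: pd_const_fun pd_const)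
qed

lemma helmholtz_op_eq_0_outside_supp: "x \<notin> supp \<psi> \<Longrightarrow> helmholtz_op k \<psi> x = 0"
  by (simp add: helmholtz_op_def pd_pd_eq_0_outside_supp not_in_supp_eq_0)

lemma deriv_cos_eq: "deriv cos t = cos (t + pi / 2)"
proof -
  have "deriv cos t = - sin t" by (rule DERIV_imp_deriv) (rule DERIV_cos)
  then show ?thesis by (simp add: minus_sin_cos_eq)
qed

lemma pd_cos_coordinate:
  "pd i (\<lambda>x::real^'n::finite. c * cos (s * x $ j + d))
    = (\<lambda>x. (c * (s * (if j = i then 1 else 0))) * cos (s * x $ j + (d + pi / 2)))"
proof -
  have "cos differentiable (at t)" for t :: real using DERIV_cos[of t] real_differentiable_def by blast
  from pd_coordinate_comp[OF this, of i c s j d] show ?thesis by (simp only: deriv_cos_eq add.assoc)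
qed

lemma helmholtz_op_plane_wave: "helmholtz_op k (\<lambda>x::real^'n::finite. cos (k * x $ j + d)) x = 0"
proof -
  have shift: "cos (y + (pi + d)) = - cos (y + d)" for y
    using cos_periodic_pi[of "y + d"] by (simp add: add_ac)
  have "pd i (pd i (\<lambda>x::real^'n. cos (k * x $ j + d))) x = (if j = i then - (k\<^sup>2 * cos (k * x $ j + d)) else 0)" for i
    using pd_cos_coordinate[of i 1 k j d] pd_cos_coordinate[of i "k * (if j = i then 1 else 0)" k j "d + pi / 2"]
    by (cases "j = i") (simp_all add: pd_const power2_eq_square shift)
  then show ?thesis by (simp add: helmholtz_op_def)
qed

lemma L2_integrable_mult_test_fun:
  assumes "L2 u" "test_fun \<psi>"
  shows "integrable lborel (\<lambda>x. u x * of_real (\<psi> x))"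
  using assms L2_integrable_mult_compact_support[OF assms(1) test_fun_continuous_on[OF assms(2)]]
    not_in_supp_eq_0 unfolding test_fun_def by blast

lemma L2_integrable_mult_pd_pd:
  assumes "L2 u" "test_fun \<psi>"
  shows "integrable lborel (\<lambda>x. u x * of_real (pd i (pd j \<psi>) x))"
  using assms(2) unfolding test_fun_def
  by (intro L2_integrable_mult_compact_support[OF assms(1) _ _ pd_pd_eq_0_outside_supp]
      smooth_fun_continuous_on smooth_fun_pd) auto

definition weak_helmholtz :: "real \<Rightarrow> (real^'n::finite \<Rightarrow> complex) \<Rightarrow> (real^'n \<Rightarrow> complex) \<Rightarrow> bool" where
  "weak_helmholtz k u G \<longleftrightarrow> G \<in> borel_measurable lborel \<and>
     (\<forall>\<psi>. test_fun \<psi> \<longrightarrow> integrable lborel (\<lambda>x. G x * of_real (\<psi> x)) \<and>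
        (\<integral>x. u x * of_real (helmholtz_op k \<psi> x) \<partial>lborel) = (\<integral>x. G x * of_real (\<psi> x) \<partial>lborel))"

lemma H2_weak_helmholtz:
  fixes u :: "real^'n::finite \<Rightarrow> complex"
  assumes "H2 u"
  obtains G where "weak_helmholtz k u G"
proof -
  have "\<forall>i. \<exists>h. L2 h \<and> weak_pd2 i i u h" using assms unfolding H2_def by blast
  then obtain h where "\<forall>i. L2 (h i) \<and> weak_pd2 i i u (h i)" by metis
  then have h: "\<And>i. L2 (h i)" "\<And>i. weak_pd2 i i u (h i)" by auto
  have u: "L2 u" using assms unfolding H2_def by blast
  define G where "G x = (\<Sum>i\<in>UNIV. h i x) + of_real (k\<^sup>2) * u x" for x
  have "weak_helmholtz k u G"
    unfolding weak_helmholtz_def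
  proof (intro conjI allI impI)
    have "h i \<in> borel_measurable lborel" "u \<in> borel_measurable lborel" for i
      using h(1) u unfolding L2_def by auto
    then show "G \<in> borel_measurable lborel"
      unfolding G_def by (intro borel_measurable_add borel_measurable_sum borel_measurable_times borel_measurable_const)
    fix \<psi> :: "real^'n \<Rightarrow> real" assume \<psi>: "test_fun \<psi>"
    have ih: "integrable lborel (\<lambda>x. h i x * of_real (\<psi> x))" for i
      by (rule L2_integrable_mult_test_fun[OF h(1) \<psi>])
    have iu: "integrable lborel (\<lambda>x. u x * of_real (\<psi> x))"
      by (rule L2_integrable_mult_test_fun[OF u \<psi>])
    have iu2: "integrable lborel (\<lambda>x. u x * of_real (pd i (pd i \<psi>) x))" for i
      by (rule L2_integrable_mult_pd_pd[OF u \<psi>])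
    have G_split: "G x * of_real (\<psi> x) = (\<Sum>i\<in>UNIV. h i x * of_real (\<psi> x)) + of_real (k\<^sup>2) * (u x * of_real (\<psi> x))" for x
      by (simp add: G_def sum_distrib_right sum_distrib_left algebra_simps)
    show "integrable lborel (\<lambda>x. G x * of_real (\<psi> x))"
      unfolding G_split by (intro Bochner_Integration.integrable_add Bochner_Integration.integrable_sum integrable_mult_right ih iu)
    have "(\<integral>x. u x * of_real (helmholtz_op k \<psi> x) \<partial>lborel)
        = (\<integral>x. (\<Sum>i\<in>UNIV. u x * of_real (pd i (pd i \<psi>) x)) + of_real (k\<^sup>2) * (u x * of_real (\<psi> x)) \<partial>lborel)"
      by (simp add: helmholtz_op_def sum_distrib_left algebra_simps)
    also have "\<dots> = (\<Sum>i\<in>UNIV. \<integral>x. u x * of_real (pd i (pd i \<psi>) x) \<partial>lborel) + of_real (k\<^sup>2) * (\<integral>x. u x * of_real (\<psi> x) \<partial>lborel)"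
      by (simp add: iu iu2 Bochner_Integration.integrable_sum)
    also have "\<dots> = (\<Sum>i\<in>UNIV. \<integral>x. h i x * of_real (\<psi> x) \<partial>lborel) + of_real (k\<^sup>2) * (\<integral>x. u x * of_real (\<psi> x) \<partial>lborel)"
      using h(2) \<psi> unfolding weak_pd2_def by simp
    also have "\<dots> = (\<integral>x. G x * of_real (\<psi> x) \<partial>lborel)"
      unfolding G_split by (simp add: ih iu Bochner_Integration.integrable_sum)
    finally show "(\<integral>x. u x * of_real (helmholtz_op k \<psi> x) \<partial>lborel) = (\<integral>x. G x * of_real (\<psi> x) \<partial>lborel)" .
  qed
  then show ?thesis by (rule that)
qed

lemma weak_helmholtz_integral_eq_0:
  assumes G: "weak_helmholtz k u G" and u0: "AE x in lborel. x \<notin> S \<longrightarrow> u x = 0"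
    and \<psi>: "test_fun \<psi>" and solves: "\<And>x. x \<in> S \<Longrightarrow> helmholtz_op k \<psi> x = 0"
  shows "(\<integral>x. G x * of_real (\<psi> x) \<partial>lborel) = 0"
proof -
  have "AE x in lborel. u x * of_real (helmholtz_op k \<psi> x) = 0"
    using u0 by eventually_elim (metis solves mult_zero_left mult_zero_right of_real_0)
  then have "(\<integral>x. u x * of_real (helmholtz_op k \<psi> x) \<partial>lborel) = 0" by (rule integral_eq_zero_AE)
  then show ?thesis using G \<psi> unfolding weak_helmholtz_def by simp
qed

lemma weak_helmholtz_exterior_integral_eq_0:
  assumes G: "weak_helmholtz k u G" and u0: "AE x in lborel. x \<notin> S \<longrightarrow> u x = 0"
    and S: "closed S" and \<psi>: "test_fun \<psi>"
  shows "(\<integral>x. indicator (- S) x *\<^sub>R (G x * of_real (\<psi> x)) \<partial>lborel) = 0"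
proof (rule integral_indicator_eq_0_if_vanishing_distribution)
  show "open (- S)" using S by auto
  show "G \<in> borel_measurable lborel" using G unfolding weak_helmholtz_def by blast
  show "smooth_fun \<psi>" using \<psi> unfolding test_fun_def by blast
  have "- S \<in> sets lborel" using S by auto
  then show "integrable lborel (\<lambda>x. indicator (- S) x *\<^sub>R (G x * of_real (\<psi> x)))"
    using G \<psi> unfolding weak_helmholtz_def by (intro integrable_mult_indicator) auto
  fix \<psi>' assume "test_fun \<psi>'" "supp \<psi>' \<subseteq> - S"
  then show "(\<integral>x. G x * of_real (\<psi>' x) \<partial>lborel) = 0"
    by (intro weak_helmholtz_integral_eq_0[OF G u0] helmholtz_op_eq_0_outside_supp) auto
qed

lemma integrable_indicator_mult_continuous:
  fixes \<phi> :: "real^'n::finite \<Rightarrow> complex"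
  assumes bd: "bounded \<Omega>" and op: "open \<Omega>" and c\<phi>: "continuous_on (closure \<Omega>) \<phi>"
    and b\<phi>: "bounded (\<phi> ` closure \<Omega>)" and c\<rho>: "continuous_on UNIV \<rho>"
  shows "integrable lborel (\<lambda>x. indicator \<Omega> x *\<^sub>R (\<phi> x * of_real (\<rho> x)))"
proof -
  have "compact (closure \<Omega>)" using bd by (simp add: compact_closure)
  then have "bounded (\<rho> ` closure \<Omega>)"
    using compact_continuous_image[OF continuous_on_subset[OF c\<rho>]] compact_imp_bounded by blast
  then obtain M1 where M1: "\<forall>y\<in>\<rho> ` closure \<Omega>. norm y \<le> M1" unfolding bounded_iff by blast
  obtain M2 where M2: "\<forall>y\<in>\<phi> ` closure \<Omega>. norm y \<le> M2" using b\<phi> unfolding bounded_iff by blast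
  have "integrable lborel (indicat_real \<Omega>)"
  proof (rule integrable_real_indicator)
    show "\<Omega> \<in> sets lborel" using borel_open[OF op] by simp
    show "emeasure lborel \<Omega> < \<infinity>" using bd emeasure_bounded_finite by blast
  qed
  then have bound: "integrable lborel (\<lambda>x. (M2 * M1) * indicat_real \<Omega> x)"
    by (rule integrable_mult_right)
  show ?thesis
  proof (rule Bochner_Integration.integrable_bound[OF bound])
    have "continuous_on \<Omega> (\<lambda>x. \<phi> x * of_real (\<rho> x))"
      using continuous_on_subset[OF c\<phi> closure_subset] continuous_on_subset[OF c\<rho>]
      by (intro continuous_intros) auto
    from borel_measurable_continuous_on_indicator[OF borel_open[OF op] this]
    show "(\<lambda>x. indicator \<Omega> x *\<^sub>R (\<phi> x * of_real (\<rho> x))) \<in> borel_measurable lborel"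
      by (simp add: measurable_lborel1)
    show "AE x in lborel. norm (indicator \<Omega> x *\<^sub>R (\<phi> x * of_real (\<rho> x))) \<le> norm ((M2 * M1) * indicat_real \<Omega> x)"
    proof (rule AE_I2)
      fix x show "norm (indicator \<Omega> x *\<^sub>R (\<phi> x * of_real (\<rho> x))) \<le> norm ((M2 * M1) * indicat_real \<Omega> x)"
      proof (cases "x \<in> \<Omega>")
        case True
        then have "norm (\<phi> x) \<le> M2" "norm (\<rho> x) \<le> M1" using M1 M2 closure_subset by auto
        moreover have "0 \<le> M2" using \<open>norm (\<phi> x) \<le> M2\<close> norm_ge_zero order_trans by blast
        ultimately have "norm (\<phi> x) * norm (\<rho> x) \<le> M2 * M1" by (intro mult_mono) auto
        then show ?thesis using True by (simp add: norm_mult)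
      qed simp
    qed
  qed
qed

lemma weak_helmholtz_interior_integral:
  assumes G: "weak_helmholtz k u G" and he: "helmholtz_eq \<Omega> k u \<phi>" and bd: "bounded \<Omega>" and op: "open \<Omega>"
    and c\<phi>: "continuous_on (closure \<Omega>) \<phi>" and b\<phi>: "bounded (\<phi> ` closure \<Omega>)" and \<psi>: "test_fun \<psi>"
  shows "(\<integral>x. indicator \<Omega> x *\<^sub>R (G x * of_real (\<psi> x)) \<partial>lborel)
    = (\<integral>x. indicator \<Omega> x *\<^sub>R (\<phi> x * of_real (\<psi> x)) \<partial>lborel)"
proof -
  have Gm: "G \<in> borel_measurable lborel"
    and G\<psi>: "\<And>\<psi>. test_fun \<psi> \<Longrightarrow> integrable lborel (\<lambda>x. G x * of_real (\<psi> x)) \<and>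
      (\<integral>x. u x * of_real (helmholtz_op k \<psi> x) \<partial>lborel) = (\<integral>x. G x * of_real (\<psi> x) \<partial>lborel)"
    using G unfolding weak_helmholtz_def by auto
  have iG: "integrable lborel (\<lambda>x. indicator \<Omega> x *\<^sub>R (G x * of_real (\<psi> x)))"
    using op G\<psi>[OF \<psi>] by (intro integrable_mult_indicator) auto
  note i\<phi> = integrable_indicator_mult_continuous[OF bd op c\<phi> b\<phi>]
  define F where "F x = G x - indicator \<Omega> x *\<^sub>R \<phi> x" for x
  have split: "indicator \<Omega> x *\<^sub>R (F x * of_real (\<psi> x))
      = indicator \<Omega> x *\<^sub>R (G x * of_real (\<psi> x)) - indicator \<Omega> x *\<^sub>R (\<phi> x * of_real (\<psi> x))" for x
    unfolding F_def by (cases "x \<in> \<Omega>") (simp_all add: algebra_simps)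
  have "(\<integral>x. indicator \<Omega> x *\<^sub>R (F x * of_real (\<psi> x)) \<partial>lborel) = 0"
  proof (rule integral_indicator_eq_0_if_vanishing_distribution[OF op])
    have "(\<lambda>x. indicator \<Omega> x *\<^sub>R \<phi> x) \<in> borel_measurable borel"
      by (rule borel_measurable_continuous_on_indicator[OF borel_open[OF op] continuous_on_subset[OF c\<phi> closure_subset]])
    then show "F \<in> borel_measurable lborel"
      unfolding F_def using Gm by (intro borel_measurable_diff) (simp_all add: measurable_lborel1)
    show "smooth_fun \<psi>" using \<psi> unfolding test_fun_def by blast
    show "integrable lborel (\<lambda>x. indicator \<Omega> x *\<^sub>R (F x * of_real (\<psi> x)))"
      unfolding split by (intro Bochner_Integration.integrable_diff iG i\<phi> test_fun_continuous_on \<psi>)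
    fix \<psi>' assume \<psi>': "test_fun \<psi>'" "supp \<psi>' \<subseteq> \<Omega>"
    have out: "\<psi>' x = 0" if "x \<notin> \<Omega>" for x using \<psi>'(2) that not_in_supp_eq_0 by blast
    have F\<psi>': "F x * of_real (\<psi>' x) = G x * of_real (\<psi>' x) - indicator \<Omega> x *\<^sub>R (\<phi> x * of_real (\<psi>' x))" for x
      unfolding F_def using out[of x] by (cases "x \<in> \<Omega>") (simp_all add: algebra_simps)
    have \<phi>\<psi>': "indicator \<Omega> x *\<^sub>R (\<phi> x * of_real (\<psi>' x)) = \<phi> x * of_real (\<psi>' x)" for x
      using out[of x] by (cases "x \<in> \<Omega>") auto
    have "(\<integral>x. F x * of_real (\<psi>' x) \<partial>lborel)
        = (\<integral>x. G x * of_real (\<psi>' x) \<partial>lborel) - (\<integral>x. \<phi> x * of_real (\<psi>' x) \<partial>lborel)"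
      unfolding F\<psi>' using Bochner_Integration.integral_diff[OF conjunct1[OF G\<psi>[OF \<psi>'(1)]]
          i\<phi>[OF test_fun_continuous_on[OF \<psi>'(1)]]]
      by (simp add: \<phi>\<psi>')
    also have "\<dots> = 0"
      using G\<psi>[OF \<psi>'(1)] he \<psi>' unfolding helmholtz_eq_iff by simp
    finally show "(\<integral>x. F x * of_real (\<psi>' x) \<partial>lborel) = 0" .
  qed
  then show ?thesis
    unfolding split using Bochner_Integration.integral_diff[OF iG i\<phi>[OF test_fun_continuous_on[OF \<psi>]]] by simp
qed

lemma integral_split_lipschitz_domain:
  fixes f :: "real^'n::finite \<Rightarrow> complex"
  assumes ld: "lipschitz_domain \<Omega>" and bd: "bounded \<Omega>" and f: "integrable lborel f"
  shows "(\<integral>x. f x \<partial>lborel)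
    = (\<integral>x. indicator \<Omega> x *\<^sub>R f x \<partial>lborel) + (\<integral>x. indicator (- closure \<Omega>) x *\<^sub>R f x \<partial>lborel)"
proof -
  have op: "open \<Omega>" using ld unfolding lipschitz_domain_def by blast
  have i1: "integrable lborel (\<lambda>x. indicator \<Omega> x *\<^sub>R f x)"
    using op f by (intro integrable_mult_indicator) auto
  have i2: "integrable lborel (\<lambda>x. indicator (- closure \<Omega>) x *\<^sub>R f x)"
    using f by (intro integrable_mult_indicator) auto
  have "AE x in lborel. x \<notin> frontier \<Omega>"
    by (rule AE_not_in[OF lipschitz_domain_frontier_null[OF ld bd]])
  then have "AE x in lborel. f x = indicator \<Omega> x *\<^sub>R f x + indicator (- closure \<Omega>) x *\<^sub>R f x"
  proof eventually_elim
    case (elim x)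
    then have "x \<in> \<Omega> \<or> x \<notin> closure \<Omega>" using op by (auto simp: frontier_def interior_open)
    then show ?case using closure_subset by (auto simp: indicator_def)
  qed
  then have "(\<integral>x. f x \<partial>lborel) = (\<integral>x. indicator \<Omega> x *\<^sub>R f x + indicator (- closure \<Omega>) x *\<^sub>R f x \<partial>lborel)"
    using f i1 i2 by (intro integral_cong_AE borel_measurable_integrable Bochner_Integration.integrable_add)
  also have "\<dots> = (\<integral>x. indicator \<Omega> x *\<^sub>R f x \<partial>lborel) + (\<integral>x. indicator (- closure \<Omega>) x *\<^sub>R f x \<partial>lborel)"
    by (rule Bochner_Integration.integral_add[OF i1 i2])
  finally show ?thesis .
qed

section \<open>Orthogonality of the source to plane waves\<close>

text \<open>Testing against a cut-off of the plane wave \<open>w\<close>, which solves the homogeneous equation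
  near \<open>closure \<Omega>\<close> where \<open>u\<close> lives, gives \<open>\<integral> G w = 0\<close>; on \<open>\<Omega>\<close> the function \<open>G\<close>
  is \<open>\<phi>\<close>, outside \<open>closure \<Omega>\<close> it vanishes, and \<open>frontier \<Omega>\<close> is null.\<close>

lemma helmholtz_source_orthogonal_plane_wave:
  fixes \<Omega> :: "(real^'n::finite) set" and \<phi> u :: "real^'n \<Rightarrow> complex"
  assumes bd: "bounded \<Omega>" and ld: "lipschitz_domain \<Omega>" and c\<phi>: "continuous_on (closure \<Omega>) \<phi>"
    and b\<phi>: "bounded (\<phi> ` closure \<Omega>)" and H: "H2_0 \<Omega> u" and he: "helmholtz_eq \<Omega> k u \<phi>"
  shows "(\<integral>x. indicator \<Omega> x *\<^sub>R (\<phi> x * of_real (cos (k * x $ j + d))) \<partial>lborel) = 0"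
proof -
  have op: "open \<Omega>" using ld unfolding lipschitz_domain_def by blast
  have u0: "AE x in lborel. x \<notin> closure \<Omega> \<longrightarrow> u x = 0" using H unfolding H2_0_def by blast
  obtain G where G: "weak_helmholtz k u G" using H2_weak_helmholtz H unfolding H2_0_def by blast
  obtain \<psi> V where \<psi>: "test_fun \<psi>" and V: "open V" "closure \<Omega> \<subseteq> V"
    and \<psi>V: "\<And>x. x \<in> V \<Longrightarrow> \<psi> x = cos (k * x $ j + d)"
    using test_fun_eq_near_bounded[OF smooth_fun_cos_coordinate bounded_closure[OF bd]] by blast
  have iG: "integrable lborel (\<lambda>x. G x * of_real (\<psi> x))" using G \<psi> unfolding weak_helmholtz_def by blast
  have "(\<integral>x. G x * of_real (\<psi> x) \<partial>lborel) = 0"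
  proof (rule weak_helmholtz_integral_eq_0[OF G u0 \<psi>])
    fix x assume "x \<in> closure \<Omega>"
    then have "helmholtz_op k \<psi> x = helmholtz_op k (\<lambda>x. cos (k * x $ j + d)) x"
      using V \<psi>V by (intro helmholtz_op_cong_open[OF V(1)]) auto
    then show "helmholtz_op k \<psi> x = 0" by (simp add: helmholtz_op_plane_wave)
  qed
  moreover note integral_split_lipschitz_domain[OF ld bd iG]
  moreover have "(\<integral>x. indicator (- closure \<Omega>) x *\<^sub>R (G x * of_real (\<psi> x)) \<partial>lborel) = 0"
    by (rule weak_helmholtz_exterior_integral_eq_0[OF G u0 closed_closure \<psi>])
  moreover have "(\<integral>x. indicator \<Omega> x *\<^sub>R (G x * of_real (\<psi> x)) \<partial>lborel)
      = (\<integral>x. indicator \<Omega> x *\<^sub>R (\<phi> x * of_real (\<psi> x)) \<partial>lborel)"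
    by (rule weak_helmholtz_interior_integral[OF G he bd op c\<phi> b\<phi> \<psi>])
  moreover have "indicator \<Omega> x *\<^sub>R (\<phi> x * of_real (\<psi> x))
      = indicator \<Omega> x *\<^sub>R (\<phi> x * of_real (cos (k * x $ j + d)))" for x
    using V closure_subset \<psi>V by (cases "x \<in> \<Omega>") auto
  ultimately show ?thesis by simp
qed

section \<open>Sign changes of the source and the boundary estimate\<close>

lemma connected_weighted_integral_eq_0_imp_root:
  fixes g w :: "real^'n::finite \<Rightarrow> real"
  assumes op: "open \<Omega>" and ne: "\<Omega> \<noteq> {}" and conn: "connected \<Omega>" and cg: "continuous_on \<Omega> g"
    and wpos: "\<And>y. y \<in> \<Omega> \<Longrightarrow> w y > 0"
    and int: "integrable lborel (\<lambda>y. indicator \<Omega> y * (g y * w y))"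
    and zero: "(\<integral>y. indicator \<Omega> y * (g y * w y) \<partial>lborel) = 0"
  shows "\<exists>z\<in>\<Omega>. g z = 0"
proof (rule ccontr)
  assume "\<not> (\<exists>z\<in>\<Omega>. g z = 0)"
  then have nz: "\<And>z. z \<in> \<Omega> \<Longrightarrow> g z \<noteq> 0" by blast
  have "(\<forall>z\<in>\<Omega>. g z > 0) \<or> (\<forall>z\<in>\<Omega>. g z < 0)"
  proof (rule ccontr)
    assume "\<not> ?thesis"
    then obtain a b where a: "a \<in> \<Omega>" "g a \<le> 0" and b: "b \<in> \<Omega>" "g b \<ge> 0" by force
    have "connected (g ` \<Omega>)" by (rule connected_continuous_image[OF cg conn])
    from connectedD_interval[OF this _ _ a(2) b(2)] a(1) b(1) have "0 \<in> g ` \<Omega>" by blast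
    then show False using nz by force
  qed
  then obtain s :: real where s: "\<And>z. z \<in> \<Omega> \<Longrightarrow> s * g z > 0"
    by (metis mult_1 mult_minus1 neg_0_less_iff_less)
  let ?f = "\<lambda>y. s * (indicator \<Omega> y * (g y * w y))"
  have fpos: "?f y > 0" if "y \<in> \<Omega>" for y
    using mult_pos_pos[OF s[OF that] wpos[OF that]] that by (simp add: algebra_simps)
  have "0 \<le> ?f y" for y using fpos[of y] by (cases "y \<in> \<Omega>") auto
  then have "AE y in lborel. 0 \<le> ?f y" by simp
  then have "AE y in lborel. ?f y = 0"
    using integral_nonneg_eq_0_iff_AE[OF integrable_mult_right[OF int]] zero by simp
  then have "AE y in lborel. y \<notin> \<Omega>"
    by (rule AE_mp) (auto intro!: AE_I2 dest: fpos)
  moreover have "\<Omega> \<in> sets lborel" using borel_open[OF op] by simp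
  ultimately have "\<Omega> \<in> null_sets lborel" using AE_iff_null_sets by blast
  then have "\<Omega> \<in> null_sets lebesgue" by (rule null_sets_completionI)
  then have "negligible \<Omega>" by (simp add: negligible_iff_null_sets)
  then show False using open_not_negligible[OF op ne] by blast
qed

lemma helmholtz_source_Re_Im_roots:
  fixes \<Omega> :: "(real^'n::finite) set" and \<phi> u :: "real^'n \<Rightarrow> complex"
  assumes bd: "bounded \<Omega>" and ld: "lipschitz_domain \<Omega>" and c\<phi>: "continuous_on (closure \<Omega>) \<phi>"
    and b\<phi>: "bounded (\<phi> ` closure \<Omega>)" and H: "H2_0 \<Omega> u" and he: "helmholtz_eq \<Omega> k u \<phi>"
    and k: "k \<ge> 0" and small: "k * diameter \<Omega> < pi / 2"
  shows "\<exists>z\<in>\<Omega>. Re (\<phi> z) = 0" "\<exists>z\<in>\<Omega>. Im (\<phi> z) = 0"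
proof -
  have op: "open \<Omega>" and conn: "connected \<Omega>" and ne: "\<Omega> \<noteq> {}"
    using ld unfolding lipschitz_domain_def by auto
  obtain x0 where x0: "x0 \<in> \<Omega>" using ne by blast
  obtain j :: 'n where True by simp
  define w where "w y = cos (k * y $ j + - k * x0 $ j)" for y :: "real^'n"
  have wpos: "w y > 0" if "y \<in> \<Omega>" for y
  proof -
    have "\<bar>y $ j - x0 $ j\<bar> \<le> dist y x0"
      using component_le_norm_cart[of "y - x0" j] by (simp add: dist_norm)
    also have "\<dots> \<le> diameter \<Omega>" by (rule diameter_bounded_bound[OF bd that x0])
    finally have "\<bar>k * y $ j + - k * x0 $ j\<bar> < pi / 2"
      using k small mult_left_mono[of _ _ k] by (simp add: abs_mult right_diff_distrib[symmetric]) fastforce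
    then have "- (pi / 2) < k * y $ j + - k * x0 $ j" "k * y $ j + - k * x0 $ j < pi / 2" by linarith+
    then show ?thesis unfolding w_def by (rule cos_gt_zero_pi)
  qed
  have orth: "(\<integral>y. indicator \<Omega> y *\<^sub>R (\<phi> y * of_real (w y)) \<partial>lborel) = 0"
    unfolding w_def by (rule helmholtz_source_orthogonal_plane_wave[OF bd ld c\<phi> b\<phi> H he])
  have int: "integrable lborel (\<lambda>y. indicator \<Omega> y *\<^sub>R (\<phi> y * of_real (w y)))"
    unfolding w_def by (intro integrable_indicator_mult_continuous[OF bd op c\<phi> b\<phi>] continuous_intros)
  have c\<phi>\<Omega>: "continuous_on \<Omega> \<phi>" using continuous_on_subset[OF c\<phi> closure_subset] .
  show "\<exists>z\<in>\<Omega>. Re (\<phi> z) = 0"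
  proof (rule connected_weighted_integral_eq_0_imp_root[OF op ne conn _ wpos])
    show "continuous_on \<Omega> (\<lambda>y. Re (\<phi> y))" using c\<phi>\<Omega> by (intro continuous_intros)
    show "integrable lborel (\<lambda>y. indicator \<Omega> y * (Re (\<phi> y) * w y))" using integrable_Re[OF int] by simp
    show "(\<integral>y. indicator \<Omega> y * (Re (\<phi> y) * w y) \<partial>lborel) = 0" using integral_Re[OF int] orth by simp
  qed
  show "\<exists>z\<in>\<Omega>. Im (\<phi> z) = 0"
  proof (rule connected_weighted_integral_eq_0_imp_root[OF op ne conn _ wpos])
    show "continuous_on \<Omega> (\<lambda>y. Im (\<phi> y))" using c\<phi>\<Omega> by (intro continuous_intros)
    show "integrable lborel (\<lambda>y. indicator \<Omega> y * (Im (\<phi> y) * w y))" using integrable_Im[OF int] by simp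
    show "(\<integral>y. indicator \<Omega> y * (Im (\<phi> y) * w y) \<partial>lborel) = 0" using integral_Im[OF int] orth by simp
  qed
qed

lemma holder_space_diff_le:
  assumes hs: "holder_space \<alpha> S \<phi>" and S: "bounded S" and \<alpha>: "0 \<le> \<alpha>"
    and xy: "x \<in> S" "y \<in> S" "x \<noteq> y"
  shows "cmod (\<phi> x - \<phi> y) \<le> holder_seminorm \<alpha> S \<phi> * diameter S powr \<alpha>"
    and "0 \<le> holder_seminorm \<alpha> S \<phi>"
proof -
  define Q where "Q = {cmod (\<phi> x - \<phi> y) / (dist x y powr \<alpha>) | x y. x \<in> S \<and> y \<in> S \<and> x \<noteq> y}"
  have "bdd_above Q" using hs unfolding holder_space_def Q_def by auto
  moreover have "cmod (\<phi> x - \<phi> y) / dist x y powr \<alpha> \<in> Q" unfolding Q_def using xy by blast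
  ultimately have q: "cmod (\<phi> x - \<phi> y) / dist x y powr \<alpha> \<le> holder_seminorm \<alpha> S \<phi>"
    unfolding holder_seminorm_def Q_def[symmetric] by (intro cSup_upper)
  have dp: "dist x y powr \<alpha> > 0" using xy(3) by simp
  show sem0: "0 \<le> holder_seminorm \<alpha> S \<phi>"
    using q dp by (smt (verit) divide_nonneg_pos norm_ge_zero)
  have "cmod (\<phi> x - \<phi> y) \<le> holder_seminorm \<alpha> S \<phi> * dist x y powr \<alpha>"
    using q dp by (simp add: divide_le_eq)
  also have "\<dots> \<le> holder_seminorm \<alpha> S \<phi> * diameter S powr \<alpha>"
    using diameter_bounded_bound[OF S xy(1,2)] \<alpha> sem0 by (intro mult_left_mono powr_mono2) auto
  finally show "cmod (\<phi> x - \<phi> y) \<le> holder_seminorm \<alpha> S \<phi> * diameter S powr \<alpha>" .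
qed

lemma holder_norm_ge:
  assumes hs: "holder_space \<alpha> S \<phi>" and S: "bounded S" and \<alpha>: "0 \<le> \<alpha>"
    and xy: "x \<in> S" "y \<in> S" "x \<noteq> y"
  shows "cmod (\<phi> x) \<le> holder_norm \<alpha> S \<phi>" and "holder_seminorm \<alpha> S \<phi> \<le> holder_norm \<alpha> S \<phi>"
proof -
  obtain B where "\<forall>y\<in>\<phi> ` S. norm y \<le> B" using hs unfolding holder_space_def bounded_iff by blast
  then have "bdd_above ((\<lambda>x. cmod (\<phi> x)) ` S)" by (intro bdd_aboveI[of _ B]) auto
  then have "cmod (\<phi> x) \<le> Sup ((\<lambda>x. cmod (\<phi> x)) ` S)" using xy(1) by (intro cSup_upper) auto
  then show "cmod (\<phi> x) \<le> holder_norm \<alpha> S \<phi>" "holder_seminorm \<alpha> S \<phi> \<le> holder_norm \<alpha> S \<phi>"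
    using holder_space_diff_le(2)[OF assms] norm_ge_zero[of "\<phi> x"] unfolding holder_norm_def by linarith+
qed

lemma holder_bound_from_Re_Im_roots:
  assumes hs: "holder_space \<alpha> S \<phi>" and S: "bounded S" and \<alpha>: "0 \<le> \<alpha>" and x: "x \<in> S"
    and zr: "zr \<in> S" "zr \<noteq> x" "Re (\<phi> zr) = 0" and zi: "zi \<in> S" "zi \<noteq> x" "Im (\<phi> zi) = 0"
  shows "cmod (\<phi> x) \<le> 2 * holder_seminorm \<alpha> S \<phi> * diameter S powr \<alpha>"
proof -
  have "\<bar>Re (\<phi> x)\<bar> \<le> cmod (\<phi> x - \<phi> zr)" using abs_Re_le_cmod[of "\<phi> x - \<phi> zr"] zr(3) by simp
  also have "\<dots> \<le> holder_seminorm \<alpha> S \<phi> * diameter S powr \<alpha>"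
    using holder_space_diff_le(1)[OF hs S \<alpha> x zr(1)] zr(2) by simp
  finally have re: "\<bar>Re (\<phi> x)\<bar> \<le> holder_seminorm \<alpha> S \<phi> * diameter S powr \<alpha>" .
  have "\<bar>Im (\<phi> x)\<bar> \<le> cmod (\<phi> x - \<phi> zi)" using abs_Im_le_cmod[of "\<phi> x - \<phi> zi"] zi(3) by simp
  also have "\<dots> \<le> holder_seminorm \<alpha> S \<phi> * diameter S powr \<alpha>"
    using holder_space_diff_le(1)[OF hs S \<alpha> x zi(1)] zi(2) by simp
  finally have im: "\<bar>Im (\<phi> x)\<bar> \<le> holder_seminorm \<alpha> S \<phi> * diameter S powr \<alpha>" .
  show ?thesis using cmod_le[of "\<phi> x"] re im by simp
qed

lemma one_le_const_mult_powr:
  fixes k D \<alpha> :: real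
  assumes k: "0 \<le> k" and kD: "pi / 2 \<le> k * D" and \<alpha>: "0 \<le> \<alpha>" "\<alpha> \<le> 1"
  shows "1 \<le> (2 + 2 * k / pi) * D powr \<alpha>"
proof -
  have "0 < k * D" using kD pi_gt_zero by linarith
  then have D: "0 < D" using k by (simp add: zero_less_mult_iff)
  have C: "1 \<le> 2 + 2 * k / pi" using k by simp
  show ?thesis
  proof (cases "1 \<le> D")
    case True
    then have "1 \<le> D powr \<alpha>" using \<alpha>(1) by (rule ge_one_powr_ge_zero)
    then show ?thesis using C by (metis mult_mono' mult_1 zero_le_one)
  next
    case False
    have "1 \<le> 2 * (k * D) / pi" using kD by (simp add: field_simps)
    also have "\<dots> \<le> (2 + 2 * k / pi) * D" using D by (simp add: field_simps)
    also have "\<dots> \<le> (2 + 2 * k / pi) * D powr \<alpha>"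
      using powr_mono'[of \<alpha> 1 D] \<alpha> D False C by (intro mult_left_mono) auto
    finally show ?thesis .
  qed
qed

lemma helmholtz_source_frontier_bound:
  assumes bd: "bounded \<Omega>" and ld: "lipschitz_domain \<Omega>" and \<alpha>: "0 \<le> \<alpha>" "\<alpha> \<le> 1"
    and hs: "holder_space \<alpha> (closure \<Omega>) \<phi>" and H: "H2_0 \<Omega> u" and he: "helmholtz_eq \<Omega> k u \<phi>"
    and k: "k \<ge> 0" and x: "x \<in> frontier \<Omega>"
  shows "cmod (\<phi> x) \<le> (2 + 2 * k / pi) * diameter \<Omega> powr \<alpha> * holder_norm \<alpha> (closure \<Omega>) \<phi>"
proof -
  let ?C = "2 + 2 * k / pi" and ?sem = "holder_seminorm \<alpha> (closure \<Omega>) \<phi>"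
  have op: "open \<Omega>" and ne: "\<Omega> \<noteq> {}" using ld unfolding lipschitz_domain_def by auto
  have c\<phi>: "continuous_on (closure \<Omega>) \<phi>" and b\<phi>: "bounded (\<phi> ` closure \<Omega>)"
    using hs unfolding holder_space_def by auto
  have xcl: "x \<in> closure \<Omega>" and xO: "x \<notin> \<Omega>" using x op by (auto simp: frontier_def interior_open)
  have bcl: "bounded (closure \<Omega>)" using bd by (rule bounded_closure)
  have D: "diameter (closure \<Omega>) = diameter \<Omega>" using bd by (rule diameter_closure)
  obtain z where z: "z \<in> \<Omega>" using ne by blast
  have z': "z \<in> closure \<Omega>" "x \<noteq> z" using z xO closure_subset by auto
  note sem0 = holder_space_diff_le(2)[OF hs bcl \<alpha>(1) xcl z']
  note hn = holder_norm_ge[OF hs bcl \<alpha>(1) xcl z']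
  show ?thesis
  proof (cases "k * diameter \<Omega> < pi / 2")
    case True
    obtain zr where zr: "zr \<in> \<Omega>" "Re (\<phi> zr) = 0"
      using helmholtz_source_Re_Im_roots(1)[OF bd ld c\<phi> b\<phi> H he k True] by blast
    obtain zi where zi: "zi \<in> \<Omega>" "Im (\<phi> zi) = 0"
      using helmholtz_source_Re_Im_roots(2)[OF bd ld c\<phi> b\<phi> H he k True] by blast
    have "zr \<in> closure \<Omega>" "zr \<noteq> x" "zi \<in> closure \<Omega>" "zi \<noteq> x"
      using zr(1) zi(1) xO closure_subset by auto
    from holder_bound_from_Re_Im_roots[OF hs bcl \<alpha>(1) xcl this(1,2) zr(2) this(3,4) zi(2)]
    have "cmod (\<phi> x) \<le> 2 * ?sem * diameter \<Omega> powr \<alpha>" unfolding D .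
    also have "\<dots> \<le> ?C * holder_norm \<alpha> (closure \<Omega>) \<phi> * diameter \<Omega> powr \<alpha>"
      using hn(2) sem0 k by (intro mult_right_mono mult_mono) auto
    finally show ?thesis by (simp only: ac_simps)
  next
    case False
    then have C: "1 \<le> ?C * diameter \<Omega> powr \<alpha>" using one_le_const_mult_powr[OF k _ \<alpha>] by simp
    have "0 \<le> holder_norm \<alpha> (closure \<Omega>) \<phi>" using hn(1) norm_ge_zero order_trans by blast
    with C have "holder_norm \<alpha> (closure \<Omega>) \<phi> \<le> ?C * diameter \<Omega> powr \<alpha> * holder_norm \<alpha> (closure \<Omega>) \<phi>"
      by (simp add: mult_le_cancel_right1)
    with hn(1) show ?thesis by (rule order_trans)
  qed
qed

theorem proposition2p7:
  fixes k Rm :: real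
  assumes "CARD('n::finite) \<ge> 2" and "k \<ge> 0"
  shows "\<exists>C>0. \<forall>(\<Omega> :: (real^'n) set) (\<alpha>::real) \<phi> u.
     bounded \<Omega> \<and> lipschitz_domain \<Omega> \<and> diameter \<Omega> \<le> Rm \<and> 0 \<le> \<alpha> \<and> \<alpha> \<le> 1 \<and>
     holder_space \<alpha> (closure \<Omega>) \<phi> \<and> H2_0 \<Omega> u \<and> helmholtz_eq \<Omega> k u \<phi> \<longrightarrow>
     Sup ((\<lambda>x. cmod (\<phi> x)) ` frontier \<Omega>) \<le> C * (diameter \<Omega>) powr \<alpha> * holder_norm \<alpha> (closure \<Omega>) \<phi>"
proof (intro exI[of _ "2 + 2 * k / pi"] conjI allI impI)
  show "0 < 2 + 2 * k / pi" using assms(2) by (simp add: add_pos_nonneg)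
  fix \<Omega> :: "(real^'n) set" and \<alpha> :: real and \<phi> u
  assume "bounded \<Omega> \<and> lipschitz_domain \<Omega> \<and> diameter \<Omega> \<le> Rm \<and> 0 \<le> \<alpha> \<and> \<alpha> \<le> 1 \<and>
     holder_space \<alpha> (closure \<Omega>) \<phi> \<and> H2_0 \<Omega> u \<and> helmholtz_eq \<Omega> k u \<phi>"
  then have bd: "bounded \<Omega>" and ld: "lipschitz_domain \<Omega>" and \<alpha>: "0 \<le> \<alpha>" "\<alpha> \<le> 1"
    and hs: "holder_space \<alpha> (closure \<Omega>) \<phi>" and H: "H2_0 \<Omega> u" and he: "helmholtz_eq \<Omega> k u \<phi>"
    by auto
  have "\<Omega> \<noteq> {}" using ld unfolding lipschitz_domain_def by blast
  moreover have "\<Omega> \<noteq> UNIV" using bd not_bounded_UNIV by blast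
  ultimately have "frontier \<Omega> \<noteq> {}" by (rule frontier_not_empty)
  then show "Sup ((\<lambda>x. cmod (\<phi> x)) ` frontier \<Omega>)
      \<le> (2 + 2 * k / pi) * diameter \<Omega> powr \<alpha> * holder_norm \<alpha> (closure \<Omega>) \<phi>"
    using helmholtz_source_frontier_bound[OF bd ld \<alpha> hs H he assms(2)] by (intro cSup_least) auto
qed

end
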